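(* Let $n \geq 4$ and let $P$ be a regular convex $n$-gon. There is a bijection between the set of symmetry classes of $2$-eared triangulations of $P$ (orbits under the natural action of the dihedral group of order $2n$ by rotations and reflections) and the set of equivalence classes of compositions of $n-3$, where two compositions are considered equivalent if one can be obtained from the other by a sequence of conjugations and reversals.
   Context: A triangulation of a convex polygon $P$ uses non-crossing diagonals to divide $P$ into triangles. An ear of a triangulation $T$ is a triangle of $T$ that shares two sides with $P$; $T$ is $2$-eared if it has exactly two ears. A composition of a positive integer $m$ is an ordered sequence $(x_1,\dots,x_k)$ of positive integers with sum $m$. Compositions of $m$ correspond bijectively to subsets of the $m-1$ gaps between $m$ balls in a row (place a bar in the chosen gaps; the parts are the block sizes). The conjugate of a composition is the composition corresponding to the complementary set of gaps. The reversal of $(x_1,\dots,x_k)$ is $(x_k,\dots,x_1)$. *)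

theory Defs
  imports Main
begin

section \<open>Triangulations of a convex n-gon (vertices 0,...,n-1 in cyclic order)\<close>

definition poly_sides :: "nat \<Rightarrow> nat set set" where
  "poly_sides n = {{i, (i + 1) mod n} | i. i < n}"

definition diagonals :: "nat \<Rightarrow> nat set set" where
  "diagonals n = {{i, j} | i j. i < j \<and> j < n \<and> {i, j} \<notin> poly_sides n}"

definition crosses :: "nat set \<Rightarrow> nat set \<Rightarrow> bool" where
  "crosses d e \<longleftrightarrow> (\<exists>a b c f. (d = {a, b} \<and> e = {c, f} \<or> d = {c, f} \<and> e = {a, b})
                               \<and> a < c \<and> c < b \<and> b < f)"

definition triangulation :: "nat \<Rightarrow> nat set set \<Rightarrow> bool" where
  "triangulation n T \<longleftrightarrow> T \<subseteq> diagonals n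
     \<and> (\<forall>d\<in>T. \<forall>e\<in>T. \<not> crosses d e)
     \<and> (\<forall>d\<in>diagonals n - T. \<exists>e\<in>T. crosses d e)"

definition triangles :: "nat \<Rightarrow> nat set set \<Rightarrow> nat set set" where
  "triangles n T = {{a, b, c} | a b c. a < b \<and> b < c \<and> c < n
     \<and> {a, b} \<in> T \<union> poly_sides n \<and> {b, c} \<in> T \<union> poly_sides n \<and> {a, c} \<in> T \<union> poly_sides n}"

definition is_ear :: "nat \<Rightarrow> nat set set \<Rightarrow> nat set \<Rightarrow> bool" where
  "is_ear n T t \<longleftrightarrow> t \<in> triangles n T \<and> card {s \<in> poly_sides n. s \<subseteq> t} \<ge> 2"

definition two_eared_triangulations :: "nat \<Rightarrow> nat set set set" where
  "two_eared_triangulations n =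
     {T. triangulation n T \<and> card {t. is_ear n T t} = 2}"

definition dihedral :: "nat \<Rightarrow> (nat \<Rightarrow> nat) set" where
  "dihedral n = {(\<lambda>i. (i + k) mod n) | k. k < n} \<union> {(\<lambda>i. (k + (n - i)) mod n) | k. k < n}"

definition act :: "(nat \<Rightarrow> nat) \<Rightarrow> nat set set \<Rightarrow> nat set set" where
  "act g T = (\<lambda>d. g ` d) ` T"

definition symmetry_rel :: "nat \<Rightarrow> (nat set set \<times> nat set set) set" where
  "symmetry_rel n = {(T, act g T) | T g. T \<in> two_eared_triangulations n \<and> g \<in> dihedral n}"

definition symmetry_classes :: "nat \<Rightarrow> nat set set set set" where
  "symmetry_classes n = two_eared_triangulations n // symmetry_rel n"

definition compositions :: "nat \<Rightarrow> nat list set" where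
  "compositions m = {xs. (\<forall>x\<in>set xs. 0 < x) \<and> sum_list xs = m}"

text \<open>Gaps between m balls are numbered 1..m-1 (gap i lies after ball i).\<close>
definition comp_gaps :: "nat list \<Rightarrow> nat set" where
  "comp_gaps xs = {sum_list (take i xs) | i. 0 < i \<and> i < length xs}"

definition gaps_comp :: "nat \<Rightarrow> nat set \<Rightarrow> nat list" where
  "gaps_comp m S = (let ps = 0 # sorted_list_of_set S @ [m]
                    in map (\<lambda>i. ps ! (i + 1) - ps ! i) [0..<length ps - 1])"

definition conjugate :: "nat \<Rightarrow> nat list \<Rightarrow> nat list" where
  "conjugate m xs = gaps_comp m ({1..<m} - comp_gaps xs)"

definition comp_step :: "nat \<Rightarrow> (nat list \<times> nat list) set" where
  "comp_step m = {(xs, conjugate m xs) | xs. xs \<in> compositions m}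
               \<union> {(xs, rev xs) | xs. xs \<in> compositions m}"

definition comp_equiv :: "nat \<Rightarrow> (nat list \<times> nat list) set" where
  "comp_equiv m = (comp_step m \<union> (comp_step m)\<inverse>)\<^sup>*"

definition comp_classes :: "nat \<Rightarrow> nat list set set" where
  "comp_classes m = compositions m // comp_equiv m"

end

theory Submission
  imports Defs
begin

text \<open>
  Rotating a two-eared triangulation we may assume its ear tips are 0 and w. Every diagonal
  then separates 0 from w, so the diagonals are pairwise nested and there is exactly one of
  each length 2, ..., n - 2, measured along the side containing w. Passing from the diagonal
  of length k + 2 to the one of length k + 1 moves either its left or its right end by one
  step; the set S of those k \<in> {1, ..., n - 4} at which the left end moves is the gap set of a
  composition of n - 3, and every S arises from exactly one such "snake" triangulation. The
  reflection fixing 0 complements S and the rotation taking w to 0 complements and mirrors S;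
  as these generate the symmetries preserving the pair of ear tips, symmetry classes of snakes
  are orbits of gap sets under complement and mirror, i.e. compositions up to conjugation and
  reversal.
\<close>

definition next_vertex :: "nat \<Rightarrow> nat \<Rightarrow> nat" where
  "next_vertex n i = (i + 1) mod n"

definition prev_vertex :: "nat \<Rightarrow> nat \<Rightarrow> nat" where
  "prev_vertex n i = (i + (n - 1)) mod n"

definition rotation :: "nat \<Rightarrow> nat \<Rightarrow> nat \<Rightarrow> nat" where
  "rotation n k i = (i + k) mod n"

definition reflection :: "nat \<Rightarrow> nat \<Rightarrow> nat \<Rightarrow> nat" where
  "reflection n k i = (k + (n - i)) mod n"

lemma dihedral_eq: "dihedral n = {rotation n k | k. k < n} \<union> {reflection n k | k. k < n}"
  unfolding dihedral_def rotation_def[abs_def] reflection_def[abs_def] by simp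

lemma rotation_in_dihedral: "k < n \<Longrightarrow> rotation n k \<in> dihedral n"
  unfolding dihedral_eq by auto

lemma reflection_in_dihedral: "k < n \<Longrightarrow> reflection n k \<in> dihedral n"
  unfolding dihedral_eq by auto

lemma mod_eq_if_less_double: "x < 2 * n \<Longrightarrow> (x::nat) mod n = (if x < n then x else x - n)"
  by (simp add: le_mod_geq)

lemma next_vertex_eq: "v < n \<Longrightarrow> next_vertex n v = (if v + 1 = n then 0 else v + 1)"
  unfolding next_vertex_def by auto

lemma prev_vertex_eq: "v < n \<Longrightarrow> prev_vertex n v = (if v = 0 then n - 1 else v - 1)"
  unfolding prev_vertex_def by (cases "v = 0") (auto simp: mod_eq_if_less_double)

lemma next_vertex_less: "0 < n \<Longrightarrow> next_vertex n v < n"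
  unfolding next_vertex_def by simp

lemma prev_vertex_less: "0 < n \<Longrightarrow> prev_vertex n v < n"
  unfolding prev_vertex_def by simp

lemma rotation_less: "0 < n \<Longrightarrow> rotation n k i < n"
  unfolding rotation_def by simp

lemma reflection_eq:
  "k < n \<Longrightarrow> i < n \<Longrightarrow> reflection n k i = (if i \<le> k then k - i else k + n - i)"
  unfolding reflection_def by (auto simp: mod_eq_if_less_double)

lemma rotation_Suc: "rotation n (Suc k) i = next_vertex n (rotation n k i)"
  unfolding rotation_def next_vertex_def by (simp add: mod_Suc_eq)

lemma rotation_next_vertex: "rotation n k (next_vertex n i) = next_vertex n (rotation n k i)"
  unfolding rotation_def next_vertex_def by (simp only: mod_add_left_eq) (simp add: ac_simps)

lemma rotation_prev_vertex: "rotation n k (prev_vertex n i) = prev_vertex n (rotation n k i)"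
  unfolding rotation_def prev_vertex_def by (simp only: mod_add_left_eq) (simp add: ac_simps)

lemma rotation_rotation: "rotation n k (rotation n j i) = rotation n ((j + k) mod n) i"
  unfolding rotation_def by (simp add: mod_add_left_eq mod_add_right_eq ac_simps)

lemma rotation_reflection: "rotation n k (reflection n j i) = reflection n ((j + k) mod n) i"
proof -
  have "rotation n k (reflection n j i) = (j + (n - i) + k) mod n"
    unfolding rotation_def reflection_def by (simp only: mod_add_left_eq)
  moreover have "reflection n ((j + k) mod n) i = (j + k + (n - i)) mod n"
    unfolding reflection_def by (simp only: mod_add_left_eq)
  ultimately show ?thesis by (simp add: ac_simps)
qed

lemma reflection_rotation:
  assumes "i < n" "j < n"
  shows "reflection n k (rotation n j i) = reflection n ((k + (n - j)) mod n) i"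
proof -
  have "(k + (n - (i + j) mod n)) mod n = (k + (n - j) + (n - i)) mod n"
  proof (cases "i + j < n")
    case True
    then have "k + (n - j) + (n - i) = k + (n - (i + j)) + n" using assms by simp
    then show ?thesis using True by (metis mod_add_self2 mod_less)
  next
    case False
    then show ?thesis using assms by (simp add: mod_eq_if_less_double ac_simps)
  qed
  then show ?thesis unfolding reflection_def rotation_def by (simp add: mod_add_left_eq)
qed

lemma reflection_reflection:
  assumes "i < n" "j < n"
  shows "reflection n k (reflection n j i) = rotation n ((k + (n - j)) mod n) i"
proof -
  have "(k + (n - (j + (n - i)) mod n)) mod n = (i + (k + (n - j))) mod n"
  proof (cases "j + (n - i) < n")
    case True
    then have "i + (k + (n - j)) = k + (n - (j + (n - i))) + n" using assms by simp
    then show ?thesis using True by (metis mod_add_self2 mod_less)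
  next
    case False
    then show ?thesis using assms by (simp add: mod_eq_if_less_double ac_simps)
  qed
  then show ?thesis unfolding reflection_def rotation_def by (simp add: mod_add_right_eq)
qed

lemma rotation_inverse:
  assumes "k < n" "i < n"
  shows "rotation n ((n - k) mod n) (rotation n k i) = i"
proof -
  have "(k + (n - k) mod n) mod n = 0" using assms by (cases "k = 0") auto
  then show ?thesis
    using assms(2) rotation_rotation[of n "(n - k) mod n" k i] by (simp add: rotation_def)
qed

lemma rotation_inverse':
  assumes "k < n" "i < n"
  shows "rotation n k (rotation n ((n - k) mod n) i) = i"
proof -
  have "((n - k) mod n + k) mod n = 0" using assms by (cases "k = 0") auto
  then show ?thesis
    using assms(2) rotation_rotation[of n k "(n - k) mod n" i] by (simp add: rotation_def)
qed

lemma rotation_to_0: "u < n \<Longrightarrow> rotation n ((n - u) mod n) u = 0"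
  by (cases "u = 0") (simp_all add: rotation_def)

lemma dihedral_less: "g \<in> dihedral n \<Longrightarrow> 0 < n \<Longrightarrow> g i < n"
  unfolding dihedral_def by auto

lemma dihedral_comp:
  assumes "g \<in> dihedral n" "h \<in> dihedral n" "0 < n"
  shows "\<exists>c\<in>dihedral n. \<forall>i<n. g (h i) = c i"
proof -
  have m: "\<And>x. x mod n < n" using assms(3) by simp
  obtain k where g: "k < n" "g = rotation n k \<or> g = reflection n k"
    using assms(1) unfolding dihedral_eq by blast
  obtain j where h: "j < n" "h = rotation n j \<or> h = reflection n j"
    using assms(2) unfolding dihedral_eq by blast
  from g(2) h(2) show ?thesis
    using m rotation_rotation rotation_reflection reflection_rotation[OF _ h(1)]
      reflection_reflection[OF _ h(1)]
    unfolding dihedral_eq by (elim disjE) blast+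
qed

lemma dihedral_inverse:
  assumes "h \<in> dihedral n" "0 < n"
  shows "\<exists>h'\<in>dihedral n. \<forall>i<n. h' (h i) = i"
proof -
  obtain j where j: "j < n" "h = rotation n j \<or> h = reflection n j"
    using assms(1) unfolding dihedral_eq by blast
  have "rotation n ((n - j) mod n) \<in> dihedral n" "reflection n j \<in> dihedral n"
    using assms(2) j(1) unfolding dihedral_eq by auto
  moreover have "reflection n j (reflection n j i) = i" if "i < n" for i
    using reflection_reflection[OF that j(1)] that j(1) by (simp add: rotation_def)
  ultimately show ?thesis using j rotation_inverse by blast
qed

lemma dihedral_fixing_0:
  assumes "g \<in> dihedral n" "g 0 = 0" "0 < n"
  shows "(\<forall>i<n. g i = i) \<or> (\<forall>i<n. g i = reflection n 0 i)"
proof -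
  obtain k where k: "k < n" "g = rotation n k \<or> g = reflection n k"
    using assms(1) unfolding dihedral_eq by blast
  then have "k = 0" using assms(2) unfolding rotation_def reflection_def
    by (auto dest: nat_dvd_not_less[rotated])
  then show ?thesis using k by (auto simp: rotation_def)
qed

lemma dihedral_prev_next:
  assumes "g \<in> dihedral n" "v < n" "0 < n"
  shows "{g (prev_vertex n v), g (next_vertex n v)} = {prev_vertex n (g v), next_vertex n (g v)}"
proof -
  obtain k where k: "k < n" "g = rotation n k \<or> g = reflection n k"
    using assms(1) unfolding dihedral_eq by blast
  show ?thesis
  proof (cases "g = rotation n k")
    case True
    then show ?thesis by (simp add: rotation_next_vertex rotation_prev_vertex)
  next
    case False
    then have g: "g = reflection n k" using k by blast
    have lt: "prev_vertex n v < n" "next_vertex n v < n" "reflection n k v < n"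
      using assms prev_vertex_less next_vertex_less by (auto simp: reflection_def)
    have "reflection n k (prev_vertex n v) = next_vertex n (reflection n k v)"
      unfolding reflection_eq[OF k(1) lt(1)] next_vertex_eq[OF lt(3)]
      unfolding reflection_eq[OF k(1) assms(2)] prev_vertex_eq[OF assms(2)]
      using assms k(1) by (auto split: if_splits)
    moreover have "reflection n k (next_vertex n v) = prev_vertex n (reflection n k v)"
      unfolding reflection_eq[OF k(1) lt(2)] prev_vertex_eq[OF lt(3)]
      unfolding reflection_eq[OF k(1) assms(2)] next_vertex_eq[OF assms(2)]
      using assms k(1) by (auto split: if_splits)
    ultimately show ?thesis using g by auto
  qed
qed

lemma dihedral_bij:
  assumes "g \<in> dihedral n" "0 < n"
  shows "inj_on g {..<n}" "g ` {..<n} = {..<n}"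
proof -
  obtain h' where h': "\<forall>i<n. h' (g i) = i" using dihedral_inverse[OF assms] by blast
  show inj: "inj_on g {..<n}" by (rule inj_on_inverseI[of _ h']) (use h' in auto)
  show "g ` {..<n} = {..<n}"
    by (rule endo_inj_surj) (use inj dihedral_less[OF assms] in auto)
qed

lemma crossesI: "a < c \<Longrightarrow> c < b \<Longrightarrow> b < f \<Longrightarrow> crosses {a, b} {c, f}"
  unfolding crosses_def by blast

lemma crosses_commute: "crosses d e \<longleftrightarrow> crosses e d"
  unfolding crosses_def by blast

definition interleaved :: "nat \<Rightarrow> nat \<Rightarrow> nat \<Rightarrow> nat \<Rightarrow> bool" where
  "interleaved a c b f \<longleftrightarrow> (a < c \<and> c < b \<and> b < f) \<or> (c < b \<and> b < f \<and> f < a)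
                        \<or> (b < f \<and> f < a \<and> a < c) \<or> (f < a \<and> a < c \<and> c < b)"

lemma interleaved_next_vertex:
  assumes "a < n" "b < n" "c < n" "f < n" "interleaved a c b f"
  shows "interleaved (next_vertex n a) (next_vertex n c) (next_vertex n b) (next_vertex n f)"
  using assms(5)
  unfolding interleaved_def next_vertex_eq[OF assms(1)] next_vertex_eq[OF assms(2)]
    next_vertex_eq[OF assms(3)] next_vertex_eq[OF assms(4)]
  using assms(1-4) by (auto split: if_split)

lemma interleaved_rotation:
  assumes "a < n" "b < n" "c < n" "f < n" "interleaved a c b f"
  shows "interleaved (rotation n k a) (rotation n k c) (rotation n k b) (rotation n k f)"
proof (induction k)
  case 0
  then show ?case using assms by (simp add: rotation_def)
next
  case (Suc k)
  have "0 < n" using assms by simp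
  then show ?case
    unfolding rotation_Suc by (intro interleaved_next_vertex Suc rotation_less)
qed

lemma crosses_iff_interleaved:
  "crosses d e \<longleftrightarrow> (\<exists>a b c f. d = {a, b} \<and> e = {c, f} \<and> interleaved a c b f)"
proof
  assume "crosses d e"
  then obtain a b c f where
      h: "d = {a, b} \<and> e = {c, f} \<or> d = {c, f} \<and> e = {a, b}" "a < c" "c < b" "b < f"
    unfolding crosses_def by blast
  then have "interleaved a c b f" "interleaved c b f a" unfolding interleaved_def by auto
  then show "\<exists>a b c f. d = {a, b} \<and> e = {c, f} \<and> interleaved a c b f"
    using h(1) by (metis insert_commute)
next
  assume "\<exists>a b c f. d = {a, b} \<and> e = {c, f} \<and> interleaved a c b f"
  then obtain a b c f where h: "d = {a, b}" "e = {c, f}" "interleaved a c b f" by blast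
  from h(3) consider "a < c \<and> c < b \<and> b < f" | "c < b \<and> b < f \<and> f < a"
    | "b < f \<and> f < a \<and> a < c" | "f < a \<and> a < c \<and> c < b"
    unfolding interleaved_def by blast
  then show "crosses d e"
  proof cases
    case 1
    then show ?thesis using h crossesI by blast
  next
    case 2
    then show ?thesis using h crossesI[of c b f a] crosses_commute by (metis insert_commute)
  next
    case 3
    then show ?thesis using h crossesI[of b f a c] by (metis insert_commute)
  next
    case 4
    then show ?thesis using h crossesI[of f a c b] crosses_commute by (metis insert_commute)
  qed
qed

lemma doubleton_eq_ordered: "{a, b} = {c, d} \<Longrightarrow> (a::nat) < b \<Longrightarrow> c < d \<Longrightarrow> a = c \<and> b = d"
  by (auto simp: doubleton_eq_iff)

lemma crosses_iff:
  assumes "a < b" "c < f"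
  shows "crosses {a, b} {c, f} \<longleftrightarrow> (a < c \<and> c < b \<and> b < f) \<or> (c < a \<and> a < f \<and> f < b)"
proof
  assume "crosses {a, b} {c, f}"
  then obtain A B C F where
      h: "{a, b} = {A, B} \<and> {c, f} = {C, F} \<or> {a, b} = {C, F} \<and> {c, f} = {A, B}"
    and o: "A < C" "C < B" "B < F"
    unfolding crosses_def by blast
  then have "A < B" "C < F" by simp_all
  from h show "(a < c \<and> c < b \<and> b < f) \<or> (c < a \<and> a < f \<and> f < b)"
  proof
    assume e: "{a, b} = {A, B} \<and> {c, f} = {C, F}"
    have "a = A \<and> b = B" "c = C \<and> f = F"
      using doubleton_eq_ordered[OF conjunct1[OF e] assms(1) \<open>A < B\<close>]
        doubleton_eq_ordered[OF conjunct2[OF e] assms(2) \<open>C < F\<close>] by blast+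
    then show ?thesis using o by simp
  next
    assume e: "{a, b} = {C, F} \<and> {c, f} = {A, B}"
    have "a = C \<and> b = F" "c = A \<and> f = B"
      using doubleton_eq_ordered[OF conjunct1[OF e] assms(1) \<open>C < F\<close>]
        doubleton_eq_ordered[OF conjunct2[OF e] assms(2) \<open>A < B\<close>] by blast+
    then show ?thesis using o by simp
  qed
next
  assume "(a < c \<and> c < b \<and> b < f) \<or> (c < a \<and> a < f \<and> f < b)"
  then show "crosses {a, b} {c, f}"
    using crossesI crosses_commute by blast
qed

lemma nested_not_crosses: "a < b \<Longrightarrow> c < f \<Longrightarrow> c \<le> a \<Longrightarrow> b \<le> f \<Longrightarrow> \<not> crosses {a, b} {c, f}"
  by (simp add: crosses_iff)

lemma poly_sides_eq: "poly_sides n = {{i, next_vertex n i} | i. i < n}"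
  unfolding poly_sides_def next_vertex_def by simp

lemma finite_poly_sides: "finite (poly_sides n)"
proof -
  have "poly_sides n = (\<lambda>i. {i, next_vertex n i}) ` {..<n}"
    unfolding poly_sides_eq by auto
  then show ?thesis by simp
qed

lemma doubleton_in_poly_sides_iff:
  "{x, y} \<in> poly_sides n \<longleftrightarrow> (x < n \<and> y = next_vertex n x) \<or> (y < n \<and> x = next_vertex n y)"
  unfolding poly_sides_eq by (auto simp: doubleton_eq_iff)

lemma diagonals_iff:
  "d \<in> diagonals n \<longleftrightarrow> (\<exists>i j. d = {i, j} \<and> i < n \<and> j < n \<and> i \<noteq> j) \<and> d \<notin> poly_sides n"
proof
  assume "d \<in> diagonals n"
  then show "(\<exists>i j. d = {i, j} \<and> i < n \<and> j < n \<and> i \<noteq> j) \<and> d \<notin> poly_sides n"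
    unfolding diagonals_def by fastforce
next
  assume h: "(\<exists>i j. d = {i, j} \<and> i < n \<and> j < n \<and> i \<noteq> j) \<and> d \<notin> poly_sides n"
  then obtain i j where ij: "d = {i, j}" "i < n" "j < n" "i \<noteq> j" by blast
  have np: "d \<notin> poly_sides n" using h by blast
  show "d \<in> diagonals n"
  proof (cases "i < j")
    case True
    then show ?thesis using ij np unfolding diagonals_def by blast
  next
    case False
    then have "j < i" "d = {j, i}" using ij by auto
    then show ?thesis using ij np unfolding diagonals_def by blast
  qed
qed

lemma diagonal_subset: "d \<in> diagonals n \<Longrightarrow> d \<subseteq> {..<n}"
  unfolding diagonals_def by auto

lemma diagonal_length:
  assumes "{a, b} \<in> diagonals n" "a < b"
  shows "a + 2 \<le> b" "b < n"
proof -
  obtain i j where ij: "{a, b} = {i, j}" "i < j" "j < n" "{i, j} \<notin> poly_sides n"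
    using assms(1) unfolding diagonals_def by blast
  then have "i = a" "j = b" using doubleton_eq_ordered[OF ij(1) assms(2) ij(2)] by simp_all
  then show "b < n" using ij(3) by simp
  show "a + 2 \<le> b"
  proof (rule ccontr)
    assume "\<not> a + 2 \<le> b"
    then have "b = next_vertex n a" using assms(2) \<open>b < n\<close> by (simp add: next_vertex_eq)
    then show False using ij(4) \<open>i = a\<close> \<open>j = b\<close> \<open>b < n\<close> assms(2)
      unfolding doubleton_in_poly_sides_iff by simp
  qed
qed

lemma inner_diagonal:
  assumes "1 \<le> x" "x + 2 \<le> y" "y \<le> n - 1"
  shows "{x, y} \<in> diagonals n"
proof -
  have "next_vertex n x = x + 1" "next_vertex n y \<noteq> x"
    unfolding next_vertex_def using assms by (cases "y + 1 = n"; simp)+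
  then have "{x, y} \<notin> poly_sides n"
    unfolding doubleton_in_poly_sides_iff using assms by auto
  moreover have "\<exists>i j. {x, y} = {i, j} \<and> i < n \<and> j < n \<and> i \<noteq> j"
    using assms by (intro exI[of _ x] exI[of _ y]) auto
  ultimately show ?thesis unfolding diagonals_iff by blast
qed

lemma triangulation_subset: "triangulation n T \<Longrightarrow> T \<subseteq> diagonals n"
  unfolding triangulation_def by blast

lemma triangulation_not_crosses: "triangulation n T \<Longrightarrow> d \<in> T \<Longrightarrow> e \<in> T \<Longrightarrow> \<not> crosses d e"
  unfolding triangulation_def by blast

lemma triangulation_maximal:
  "triangulation n T \<Longrightarrow> d \<in> diagonals n \<Longrightarrow> d \<notin> T \<Longrightarrow> \<exists>e\<in>T. crosses d e"
  unfolding triangulation_def by blast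

lemma act_act: "act g (act h T) = act (g \<circ> h) T"
  unfolding act_def by (auto simp: image_comp)

lemma act_cong:
  assumes "T \<subseteq> diagonals n" "\<And>i. i < n \<Longrightarrow> g i = h i"
  shows "act g T = act h T"
proof -
  have "g ` d = h ` d" if "d \<in> T" for d
  proof -
    have "d \<subseteq> {..<n}" using that assms(1) diagonal_subset by blast
    then show ?thesis using assms(2) by (intro image_cong) auto
  qed
  then show ?thesis unfolding act_def by auto
qed

lemma act_ident: "T \<subseteq> diagonals n \<Longrightarrow> \<forall>i<n. g i = i \<Longrightarrow> act g T = T"
  using act_cong[of T n g "\<lambda>i. i"] unfolding act_def by simp

lemma act_comp_cong: "T \<subseteq> diagonals n \<Longrightarrow> \<forall>i<n. g (h i) = c i \<Longrightarrow> act g (act h T) = act c T"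
  unfolding act_act by (rule act_cong) auto

lemma rotation_image_inverse:
  assumes "k < n" "X \<subseteq> {..<n}"
  shows "rotation n ((n - k) mod n) ` rotation n k ` X = X"
    and "rotation n k ` rotation n ((n - k) mod n) ` X = X"
proof -
  have "\<forall>i\<in>X. rotation n ((n - k) mod n) (rotation n k i) = i"
    "\<forall>i\<in>X. rotation n k (rotation n ((n - k) mod n) i) = i"
    using rotation_inverse[OF assms(1)] rotation_inverse'[OF assms(1)] assms(2) by auto
  then show "rotation n ((n - k) mod n) ` rotation n k ` X = X"
    and "rotation n k ` rotation n ((n - k) mod n) ` X = X"
    unfolding image_image by simp_all
qed

lemma rotation_poly_side:
  assumes "0 < n" "s \<in> poly_sides n"
  shows "rotation n k ` s \<in> poly_sides n"
proof -
  obtain i where "s = {i, next_vertex n i}" "i < n" using assms(2) unfolding poly_sides_eq by blast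
  then have "rotation n k ` s = {rotation n k i, next_vertex n (rotation n k i)}"
    by (simp add: rotation_next_vertex)
  then show ?thesis unfolding poly_sides_eq using rotation_less[OF assms(1)] by blast
qed

lemma rotation_crosses:
  assumes "d \<subseteq> {..<n}" "e \<subseteq> {..<n}" "crosses d e"
  shows "crosses (rotation n k ` d) (rotation n k ` e)"
proof -
  obtain a b c f where h: "d = {a, b}" "e = {c, f}" "interleaved a c b f"
    using assms(3) unfolding crosses_iff_interleaved by blast
  then have "interleaved (rotation n k a) (rotation n k c) (rotation n k b) (rotation n k f)"
    using assms(1,2) by (intro interleaved_rotation) auto
  then show ?thesis unfolding crosses_iff_interleaved h by auto
qed

lemma rotation_diagonal:
  assumes "k < n" "d \<in> diagonals n"
  shows "rotation n k ` d \<in> diagonals n"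
proof -
  obtain i j where ij: "d = {i, j}" "i < n" "j < n" "i \<noteq> j"
    using assms(2) unfolding diagonals_iff by blast
  have "rotation n k i \<noteq> rotation n k j" using rotation_inverse[OF assms(1)] ij by metis
  moreover have "rotation n k ` d \<notin> poly_sides n"
  proof
    assume "rotation n k ` d \<in> poly_sides n"
    then have "rotation n ((n - k) mod n) ` rotation n k ` d \<in> poly_sides n"
      using assms(1) rotation_poly_side by simp
    then show False
      using rotation_image_inverse(1)[OF assms(1) diagonal_subset[OF assms(2)]] assms(2)
      unfolding diagonals_iff by simp
  qed
  ultimately show ?thesis unfolding diagonals_iff using ij rotation_less[of n] by auto
qed

lemma act_rotation_triangulation:
  assumes "k < n" "triangulation n T"
  shows "triangulation n (act (rotation n k) T)"
proof -
  let ?r = "rotation n k" and ?s = "rotation n ((n - k) mod n)"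
  have n: "0 < n" "(n - k) mod n < n" using assms(1) by simp_all
  have TD: "T \<subseteq> diagonals n" using assms(2) triangulation_subset by blast
  have inverse: "?s ` ?r ` d = d" "?r ` ?s ` d = d" if "d \<in> diagonals n" for d
    using rotation_image_inverse[OF assms(1) diagonal_subset[OF that]] by simp_all
  have "act ?r T \<subseteq> diagonals n"
    unfolding act_def using rotation_diagonal[OF assms(1)] TD by blast
  moreover have "\<not> crosses d e" if de: "d \<in> act ?r T" "e \<in> act ?r T" for d e
  proof
    assume "crosses d e"
    obtain d0 e0 where d0e0: "d0 \<in> T" "e0 \<in> T" "d = ?r ` d0" "e = ?r ` e0"
      using de unfolding act_def by blast
    have "d \<subseteq> {..<n}" "e \<subseteq> {..<n}" using d0e0(3,4) rotation_less[OF n(1)] by auto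
    then have "crosses (?s ` d) (?s ` e)" using rotation_crosses \<open>crosses d e\<close> by blast
    moreover have "?s ` d = d0" "?s ` e = e0" using inverse d0e0 TD by auto
    ultimately show False using triangulation_not_crosses[OF assms(2)] d0e0(1,2) by simp
  qed
  moreover have "\<exists>e\<in>act ?r T. crosses d e" if d: "d \<in> diagonals n - act ?r T" for d
  proof -
    have d0: "?s ` d \<in> diagonals n" using rotation_diagonal[OF n(2)] d by blast
    have d_eq: "?r ` ?s ` d = d" using inverse(2) d by blast
    have "?s ` d \<notin> T"
    proof
      assume "?s ` d \<in> T"
      then have "?r ` ?s ` d \<in> act ?r T" unfolding act_def by blast
      then show False using d d_eq by simp
    qed
    then obtain e0 where e0: "e0 \<in> T" "crosses (?s ` d) e0"
      using triangulation_maximal[OF assms(2) d0] by blast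
    have "e0 \<subseteq> {..<n}" using e0(1) TD diagonal_subset by blast
    then have "crosses (?r ` ?s ` d) (?r ` e0)"
      using rotation_crosses diagonal_subset[OF d0] e0(2) by blast
    moreover have "?r ` e0 \<in> act ?r T" using e0(1) unfolding act_def by blast
    ultimately show ?thesis using d_eq by auto
  qed
  ultimately show ?thesis unfolding triangulation_def by blast
qed

lemma symmetry_class_eq:
  assumes "T \<in> two_eared_triangulations n"
  shows "symmetry_rel n `` {T} = {act g T | g. g \<in> dihedral n}"
  unfolding symmetry_rel_def using assms by blast

lemma two_eared_subset_diagonals: "T \<in> two_eared_triangulations n \<Longrightarrow> T \<subseteq> diagonals n"
  unfolding two_eared_triangulations_def triangulation_def by blast

lemma symmetry_class_act:
  assumes n: "0 < n" and T: "T \<in> two_eared_triangulations n" and h: "h \<in> dihedral n"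
    and hT: "act h T \<in> two_eared_triangulations n"
  shows "symmetry_rel n `` {act h T} = symmetry_rel n `` {T}"
proof -
  have TD: "T \<subseteq> diagonals n" "act h T \<subseteq> diagonals n"
    using two_eared_subset_diagonals T hT by blast+
  obtain hi where hi: "hi \<in> dihedral n" "\<forall>i<n. hi (h i) = i" using dihedral_inverse[OF h n] by blast
  have h_inverse: "act hi (act h T) = T"
    using act_comp_cong[of T n hi h "\<lambda>i. i", OF TD(1)] hi(2) act_ident[OF TD(1)] by simp
  show ?thesis unfolding symmetry_class_eq[OF T] symmetry_class_eq[OF hT]
  proof (intro equalityI subsetI)
    fix X assume "X \<in> {act g (act h T) | g. g \<in> dihedral n}"
    then obtain g where g: "g \<in> dihedral n" "X = act g (act h T)" by blast
    obtain c where c: "c \<in> dihedral n" "\<forall>i<n. g (h i) = c i"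
      using dihedral_comp[OF g(1) h n] by blast
    have "X = act c T" using g(2) act_comp_cong[of T n g h c, OF TD(1) c(2)] by simp
    then show "X \<in> {act g T | g. g \<in> dihedral n}" using c(1) by blast
  next
    fix X assume "X \<in> {act g T | g. g \<in> dihedral n}"
    then obtain g where g: "g \<in> dihedral n" "X = act g T" by blast
    obtain c where c: "c \<in> dihedral n" "\<forall>i<n. g (hi i) = c i"
      using dihedral_comp[OF g(1) hi(1) n] by blast
    have "X = act g (act hi (act h T))" using g(2) h_inverse by simp
    also have "\<dots> = act c (act h T)" by (rule act_comp_cong[of "act h T" n g hi c, OF TD(2) c(2)])
    finally show "X \<in> {act g (act h T) | g. g \<in> dihedral n}" using c(1) by blast
  qed
qed

definition ear_tips :: "nat \<Rightarrow> nat set set \<Rightarrow> nat set" where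
  "ear_tips n T = {v. v < n \<and> {prev_vertex n v, next_vertex n v} \<in> T}"

definition ear_at :: "nat \<Rightarrow> nat \<Rightarrow> nat set" where
  "ear_at n v = {prev_vertex n v, v, next_vertex n v}"

lemma inj_on_ear_at:
  assumes "4 \<le> n"
  shows "inj_on (ear_at n) {..<n}"
proof
  fix u v assume u: "u \<in> {..<n}" and v: "v \<in> {..<n}" and e: "ear_at n u = ear_at n v"
  have "u \<in> ear_at n v" "next_vertex n u \<in> ear_at n v" "prev_vertex n u \<in> ear_at n v"
    using e unfolding ear_at_def by (metis insertCI)+
  then show "u = v" using u v assms unfolding ear_at_def
    by (auto simp: next_vertex_eq prev_vertex_eq split: if_splits)
qed

lemma card_ear_at: "4 \<le> n \<Longrightarrow> v < n \<Longrightarrow> card (ear_at n v) = 3"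
  unfolding ear_at_def by (auto simp: next_vertex_eq prev_vertex_eq card_insert_if)

lemma prev_next_not_poly_side:
  "4 \<le> n \<Longrightarrow> v < n \<Longrightarrow> {prev_vertex n v, next_vertex n v} \<notin> poly_sides n"
  unfolding doubleton_in_poly_sides_iff
  by (auto simp: next_vertex_eq prev_vertex_eq prev_vertex_less next_vertex_less split: if_splits)

lemma triangles_memI:
  assumes "x < n" "y < n" "z < n" "x \<noteq> y" "y \<noteq> z" "x \<noteq> z"
    and "{x, y} \<in> T \<union> poly_sides n" "{y, z} \<in> T \<union> poly_sides n" "{x, z} \<in> T \<union> poly_sides n"
  shows "{x, y, z} \<in> triangles n T"
proof -
  have sides: "{p, q} \<in> T \<union> poly_sides n" if "p \<in> {x, y, z}" "q \<in> {x, y, z}" "p \<noteq> q" for p q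
    using that assms(7-9) by (auto simp: insert_commute)
  have "\<exists>a b c. {x, y, z} = {a, b, c} \<and> a < b \<and> b < c"
    using assms(4-6) by (metis insert_commute linorder_neqE_nat)
  then obtain a b c where abc: "{x, y, z} = {a, b, c}" "a < b" "b < c" by blast
  then have "c \<in> {x, y, z}" by blast
  then have "c < n" using assms(1-3) by blast
  moreover have "{a, b} \<in> T \<union> poly_sides n" "{b, c} \<in> T \<union> poly_sides n" "{a, c} \<in> T \<union> poly_sides n"
    using sides abc by auto
  ultimately show ?thesis unfolding triangles_def using abc by blast
qed

lemma sides_in_triangle_ear_at:
  assumes "4 \<le> n" "finite t" "card t = 3" and s: "s1 \<in> poly_sides n" "s2 \<in> poly_sides n"
    "s1 \<noteq> s2" "s1 \<subseteq> t" "s2 \<subseteq> t"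
  shows "\<exists>v<n. t = ear_at n v"
proof -
  obtain i j where ij: "s1 = {i, next_vertex n i}" "s2 = {j, next_vertex n j}" "i < n" "j < n"
    using s(1,2) unfolding poly_sides_eq by blast
  have ne: "i \<noteq> j" "next_vertex n i \<noteq> next_vertex n j"
    "i \<noteq> next_vertex n i" "j \<noteq> next_vertex n j"
    using s(3) ij assms(1) by (auto simp: next_vertex_eq split: if_splits)
  have "i = next_vertex n j \<or> j = next_vertex n i"
  proof (rule ccontr)
    assume "\<not> (i = next_vertex n j \<or> j = next_vertex n i)"
    then have "card {i, next_vertex n i, j, next_vertex n j} = 4" using ne by auto
    moreover have "{i, next_vertex n i, j, next_vertex n j} \<subseteq> t" using s ij by auto
    ultimately have "4 \<le> card t" using card_mono[OF assms(2)] by metis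
    then show False using assms(3) by simp
  qed
  then obtain v p where vp: "v < n" "v = next_vertex n p" "p < n" "p \<in> t" "v \<in> t"
    "next_vertex n v \<in> t"
    using s ij by auto
  then have "prev_vertex n v = p" by (auto simp: next_vertex_eq prev_vertex_eq)
  then have v: "v < n" "ear_at n v \<subseteq> t" using vp unfolding ear_at_def by auto
  then show ?thesis using card_subset_eq[OF assms(2) v(2)] card_ear_at[OF assms(1) v(1)] assms(3)
    by metis
qed

lemma is_ear_imp_ear_at:
  assumes "4 \<le> n" "is_ear n T t"
  shows "\<exists>v\<in>ear_tips n T. t = ear_at n v"
proof -
  obtain a b c where abc: "t = {a, b, c}" "a < b" "b < c" "c < n"
      "{a, b} \<in> T \<union> poly_sides n" "{b, c} \<in> T \<union> poly_sides n" "{a, c} \<in> T \<union> poly_sides n"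
    using assms(2) unfolding is_ear_def triangles_def by blast
  have t: "finite t" "card t = 3" using abc by auto
  have "\<not> card {s \<in> poly_sides n. s \<subseteq> t} \<le> Suc 0"
    using assms(2) unfolding is_ear_def by simp
  then obtain s1 s2 where "s1 \<in> poly_sides n" "s2 \<in> poly_sides n" "s1 \<noteq> s2" "s1 \<subseteq> t" "s2 \<subseteq> t"
    using card_le_Suc0_iff_eq[of "{s \<in> poly_sides n. s \<subseteq> t}"] finite_poly_sides[of n]
    by auto
  then obtain v where v: "v < n" "t = ear_at n v"
    using sides_in_triangle_ear_at[OF assms(1) t] by blast
  have "prev_vertex n v \<noteq> next_vertex n v"
    using v(1) assms(1) by (auto simp: next_vertex_eq prev_vertex_eq)
  moreover have "prev_vertex n v \<in> {a, b, c}" "next_vertex n v \<in> {a, b, c}"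
    using v(2) abc(1) unfolding ear_at_def by auto
  ultimately have "{prev_vertex n v, next_vertex n v} \<in> T \<union> poly_sides n"
    using abc(5-7) by (auto simp: insert_commute)
  then have "v \<in> ear_tips n T"
    using prev_next_not_poly_side[OF assms(1) v(1)] v(1) unfolding ear_tips_def by blast
  then show ?thesis using v(2) by blast
qed

lemma ear_at_is_ear:
  assumes "4 \<le> n" "v \<in> ear_tips n T"
  shows "is_ear n T (ear_at n v)"
proof -
  have v: "v < n" "{prev_vertex n v, next_vertex n v} \<in> T"
    using assms(2) unfolding ear_tips_def by auto
  have n: "0 < n" using assms(1) by simp
  have sides: "{prev_vertex n v, v} \<in> poly_sides n" "{v, next_vertex n v} \<in> poly_sides n"
    unfolding doubleton_in_poly_sides_iff using v(1) n
    by (auto simp: next_vertex_eq prev_vertex_eq prev_vertex_less)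
  have ne: "prev_vertex n v \<noteq> v" "v \<noteq> next_vertex n v" "prev_vertex n v \<noteq> next_vertex n v"
    using v(1) assms(1) by (auto simp: next_vertex_eq prev_vertex_eq)
  have tri: "ear_at n v \<in> triangles n T"
    unfolding ear_at_def using v sides ne n
    by (intro triangles_memI) (auto simp: prev_vertex_less next_vertex_less)
  have "{{prev_vertex n v, v}, {v, next_vertex n v}} \<subseteq> {s \<in> poly_sides n. s \<subseteq> ear_at n v}"
    using sides unfolding ear_at_def by auto
  from card_mono[OF _ this] have "card {{prev_vertex n v, v}, {v, next_vertex n v}}
      \<le> card {s \<in> poly_sides n. s \<subseteq> ear_at n v}"
    using finite_poly_sides by simp
  moreover have "card {{prev_vertex n v, v}, {v, next_vertex n v}} = 2"
    using ne by (auto simp: doubleton_eq_iff)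
  ultimately have "2 \<le> card {s \<in> poly_sides n. s \<subseteq> ear_at n v}" by simp
  then show ?thesis using tri unfolding is_ear_def by simp
qed

lemma card_ears:
  assumes "4 \<le> n"
  shows "card {t. is_ear n T t} = card (ear_tips n T)"
proof -
  have "{t. is_ear n T t} = ear_at n ` ear_tips n T"
    using is_ear_imp_ear_at[OF assms] ear_at_is_ear[OF assms] by blast
  moreover have "inj_on (ear_at n) (ear_tips n T)"
    using inj_on_ear_at[OF assms] by (rule inj_on_subset) (auto simp: ear_tips_def)
  ultimately show ?thesis by (simp add: card_image)
qed

lemma ear_tips_act:
  assumes "g \<in> dihedral n" "4 \<le> n" "T \<subseteq> diagonals n"
  shows "ear_tips n (act g T) = g ` ear_tips n T"
proof (intro equalityI subsetI)
  have n: "0 < n" using assms by simp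
  note bij = dihedral_bij[OF assms(1) n]
  fix u assume u: "u \<in> ear_tips n (act g T)"
  then have "u < n" unfolding ear_tips_def by simp
  then obtain v where v: "v < n" "u = g v" using bij(2) by (metis imageE lessThan_iff)
  obtain d where d: "d \<in> T" "{prev_vertex n u, next_vertex n u} = g ` d"
    using u unfolding ear_tips_def act_def by blast
  have "g ` d = g ` {prev_vertex n v, next_vertex n v}"
    using d(2) dihedral_prev_next[OF assms(1) v(1) n] v(2) by simp
  moreover have "d \<subseteq> {..<n}" using d(1) assms(3) diagonal_subset by blast
  moreover have "{prev_vertex n v, next_vertex n v} \<subseteq> {..<n}"
    using prev_vertex_less next_vertex_less n by auto
  ultimately have "d = {prev_vertex n v, next_vertex n v}"
    using inj_on_image_eq_iff[OF bij(1)] by blast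
  then show "u \<in> g ` ear_tips n T" unfolding ear_tips_def using d(1) v by blast
next
  have n: "0 < n" using assms by simp
  fix u assume "u \<in> g ` ear_tips n T"
  then obtain v where v: "v < n" "{prev_vertex n v, next_vertex n v} \<in> T" "u = g v"
    unfolding ear_tips_def by blast
  have "g ` {prev_vertex n v, next_vertex n v} \<in> act g T" unfolding act_def using v(2) by blast
  then have "{prev_vertex n u, next_vertex n u} \<in> act g T"
    using dihedral_prev_next[OF assms(1) v(1) n] v(3) by simp
  then show "u \<in> ear_tips n (act g T)"
    unfolding ear_tips_def using dihedral_less[OF assms(1) n] v(3) by simp
qed

section \<open>Snake triangulations\<close>

text \<open>
  The diagonal of length k + 1 of the snake with gap set S is
  {snake_start n S k, snake_start n S k + k + 1}. Passing from length k + 2 to k + 1, the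
  left end moves up if k \<in> S and the right end moves down otherwise; the longest diagonal
  is {1, n - 1}.
\<close>
definition snake_start :: "nat \<Rightarrow> nat set \<Rightarrow> nat \<Rightarrow> nat" where
  "snake_start n S k = 1 + card (S \<inter> {k..<n - 3})"

definition snake :: "nat \<Rightarrow> nat set \<Rightarrow> nat set set" where
  "snake n S = {{snake_start n S k, snake_start n S k + k + 1} | k. 1 \<le> k \<and> k \<le> n - 3}"

lemma snake_start_Suc:
  assumes "k < n - 3"
  shows "snake_start n S k = (if k \<in> S then 1 else 0) + snake_start n S (k + 1)"
proof -
  have "S \<inter> {k..<n - 3} = (if k \<in> S then insert k (S \<inter> {k + 1..<n - 3}) else S \<inter> {k + 1..<n - 3})"
    using assms by (auto; metis Suc_leI le_neq_implies_less)
  then show ?thesis unfolding snake_start_def by simp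
qed

lemma snake_start_top: "snake_start n S (n - 3) = 1"
  unfolding snake_start_def by simp

lemma snake_start_ge_1: "1 \<le> snake_start n S k"
  unfolding snake_start_def by simp

lemma snake_start_antimono: "k \<le> j \<Longrightarrow> snake_start n S j \<le> snake_start n S k"
  unfolding snake_start_def by (auto intro!: card_mono)

lemma snake_end_mono:
  assumes "k \<le> j"
  shows "snake_start n S k + k \<le> snake_start n S j + j"
proof -
  have "card (S \<inter> {k..<n - 3}) \<le> card (S \<inter> {j..<n - 3} \<union> {k..<j})" by (intro card_mono) auto
  also have "\<dots> \<le> card (S \<inter> {j..<n - 3}) + card {k..<j}" by (rule card_Un_le)
  finally show ?thesis using assms unfolding snake_start_def by simp
qed

lemma snake_end_bound: "1 \<le> k \<Longrightarrow> k \<le> n - 3 \<Longrightarrow> snake_start n S k + k + 1 \<le> n - 1"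
  unfolding snake_start_def using card_mono[of "{k..<n - 3}" "S \<inter> {k..<n - 3}"] by auto

lemma snake_iff:
  "d \<in> snake n S \<longleftrightarrow> (\<exists>k. 1 \<le> k \<and> k \<le> n - 3 \<and> d = {snake_start n S k, snake_start n S k + k + 1})"
  unfolding snake_def by blast

lemma snake_image: "snake n S = (\<lambda>k. {snake_start n S k, snake_start n S k + k + 1}) ` {1..n - 3}"
  unfolding snake_def by auto

lemma snake_memI:
  "1 \<le> k \<Longrightarrow> k \<le> n - 3 \<Longrightarrow> {snake_start n S k, snake_start n S k + k + 1} \<in> snake n S"
  unfolding snake_iff by blast

lemma snake_longest:
  assumes "4 \<le> n"
  shows "{1, n - 1} \<in> snake n S"
proof -
  have "{snake_start n S (n - 3), snake_start n S (n - 3) + (n - 3) + 1} \<in> snake n S"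
    by (rule snake_memI) (use assms in auto)
  moreover have "1 + (n - 3) + 1 = n - 1" using assms by simp
  ultimately show ?thesis using snake_start_top[of n S] by simp
qed

lemma snake_subset_diagonals:
  assumes "4 \<le> n"
  shows "snake n S \<subseteq> diagonals n"
proof
  fix d assume "d \<in> snake n S"
  then obtain k where k: "1 \<le> k" "k \<le> n - 3" "d = {snake_start n S k, snake_start n S k + k + 1}"
    unfolding snake_iff by blast
  then show "d \<in> diagonals n"
    using inner_diagonal[OF snake_start_ge_1 _ snake_end_bound[OF k(1,2)]] k(1) by simp
qed

lemma snake_not_crosses:
  assumes "d \<in> snake n S" "e \<in> snake n S"
  shows "\<not> crosses d e"
proof -
  obtain k where k: "d = {snake_start n S k, snake_start n S k + k + 1}"
    using assms(1) unfolding snake_iff by blast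
  obtain j where j: "e = {snake_start n S j, snake_start n S j + j + 1}"
    using assms(2) unfolding snake_iff by blast
  have "k \<le> j \<or> j \<le> k" by linarith
  then show ?thesis
  proof
    assume "k \<le> j"
    then show ?thesis
      unfolding k j using snake_start_antimono[of k j n S] snake_end_mono[of k j n S]
      by (auto simp: crosses_iff)
  next
    assume "j \<le> k"
    then show ?thesis
      unfolding k j using snake_start_antimono[of j k n S] snake_end_mono[of j k n S]
      by (auto simp: crosses_iff)
  qed
qed

lemma snake_crosses_shorter:
  assumes "1 \<le> j" "j < n - 3" "x + 2 \<le> y"
    and "snake_start n S (j + 1) \<le> x" "y \<le> snake_start n S (j + 1) + (j + 1) + 1"
    and "\<not> (snake_start n S j \<le> x \<and> y \<le> snake_start n S j + j + 1)"
    and "{x, y} \<noteq> {snake_start n S (j + 1), snake_start n S (j + 1) + (j + 1) + 1}"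
  shows "crosses {x, y} {snake_start n S j, snake_start n S j + j + 1}"
proof (cases "j \<in> S")
  case True
  then have "snake_start n S j = snake_start n S (j + 1) + 1" using snake_start_Suc[OF assms(2)]
    by simp
  then show ?thesis using assms by (subst crosses_iff) auto
next
  case False
  then have "snake_start n S j = snake_start n S (j + 1)" using snake_start_Suc[OF assms(2)] by simp
  then show ?thesis using assms by (subst crosses_iff) auto
qed

text \<open>{x, y} crosses the snake diagonal just shorter than the shortest one spanning [x, y].\<close>
lemma inner_diagonal_crosses_snake:
  assumes n: "4 \<le> n" and xy: "1 \<le> x" "x + 2 \<le> y" "y \<le> n - 1" "{x, y} \<notin> snake n S"
  shows "\<exists>e\<in>snake n S. crosses {x, y} e"
proof -
  define covers where "covers j \<longleftrightarrow> 1 \<le> j \<and> j \<le> n - 3 \<and> snake_start n S j \<le> x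
      \<and> y \<le> snake_start n S j + j + 1" for j
  have "covers (n - 3)"
    unfolding covers_def using n xy snake_start_top[of n S] by simp arith
  define j0 where "j0 = (LEAST j. covers j)"
  have least: "covers j0" unfolding j0_def by (rule LeastI) fact
  have not_xy: "{x, y} \<noteq> {snake_start n S k, snake_start n S k + k + 1}"
    if "1 \<le> k" "k \<le> n - 3" for k
    using xy(4) snake_memI[OF that] by metis
  have "j0 \<noteq> 1"
  proof
    assume "j0 = 1"
    then have "x = snake_start n S 1" "y = snake_start n S 1 + 1 + 1"
      using least xy unfolding covers_def by auto
    moreover have "1 \<le> n - 3" using n by simp
    ultimately show False using not_xy[of 1] by simp
  qed
  then have "2 \<le> j0" "j0 \<le> n - 3" using least unfolding covers_def by auto
  define j where "j = j0 - 1"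
  have j: "1 \<le> j" "j < n - 3" "j0 = j + 1" using \<open>2 \<le> j0\<close> \<open>j0 \<le> n - 3\<close> unfolding j_def by auto
  have "\<not> covers j" using j(3) unfolding j0_def by (metis lessI not_less_Least Suc_eq_plus1)
  then have "crosses {x, y} {snake_start n S j, snake_start n S j + j + 1}"
    using least j xy(2) not_xy[of "j + 1"] unfolding covers_def
      by (intro snake_crosses_shorter) auto
  then show ?thesis using snake_memI[of j n S] j by auto
qed

lemma snake_maximal:
  assumes n: "4 \<le> n" and d: "d \<in> diagonals n" "d \<notin> snake n S"
  shows "\<exists>e\<in>snake n S. crosses d e"
proof -
  obtain x y where xy: "d = {x, y}" "x < y" "y < n" "{x, y} \<notin> poly_sides n"
    using d(1) unfolding diagonals_def by blast
  have xy2: "x + 2 \<le> y" using diagonal_length[OF d(1)[unfolded xy(1)] xy(2)] by simp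
  show ?thesis
  proof (cases "x = 0")
    case True
    then have "y \<noteq> n - 1"
      using xy(3,4) unfolding doubleton_in_poly_sides_iff by (auto simp: next_vertex_eq)
    then have "crosses d {1, n - 1}" unfolding xy(1) using True xy2 xy(3) n
      by (subst crosses_iff) auto
    then show ?thesis using snake_longest[OF n] by blast
  next
    case False
    then show ?thesis using inner_diagonal_crosses_snake[OF n] xy xy2 d(2) by simp
  qed
qed

lemma triangulation_snake: "4 \<le> n \<Longrightarrow> triangulation n (snake n S)"
  unfolding triangulation_def
  using snake_subset_diagonals snake_not_crosses snake_maximal by blast

lemma ear_tips_snake:
  assumes n: "4 \<le> n"
  shows "ear_tips n (snake n S) = {0, snake_start n S 1 + 1}"
proof (intro equalityI subsetI)
  fix v assume "v \<in> ear_tips n (snake n S)"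
  then have v: "v < n" "{prev_vertex n v, next_vertex n v} \<in> snake n S" unfolding ear_tips_def
    by auto
  then obtain k where k: "1 \<le> k" "k \<le> n - 3"
      "{prev_vertex n v, next_vertex n v} = {snake_start n S k, snake_start n S k + k + 1}"
    unfolding snake_iff by blast
  show "v \<in> {0, snake_start n S 1 + 1}"
  proof (cases "v = 0")
    case False
    have "v \<noteq> n - 1"
    proof
      assume "v = n - 1"
      then have "next_vertex n v = 0" using n by (simp add: next_vertex_eq)
      then have "0 \<in> {snake_start n S k, snake_start n S k + k + 1}" using k(3) by (metis insertCI)
      then show False using snake_start_ge_1[of n S k] by auto
    qed
    then have "prev_vertex n v = v - 1" "next_vertex n v = v + 1"
      using False v(1) by (auto simp: prev_vertex_eq next_vertex_eq)
    then have eq: "{v - 1, v + 1} = {snake_start n S k, snake_start n S k + k + 1}" using k(3)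
      by simp
    have "v - 1 < v + 1" "snake_start n S k < snake_start n S k + k + 1" by simp_all
    from doubleton_eq_ordered[OF eq this]
    have e: "v - 1 = snake_start n S k \<and> v + 1 = snake_start n S k + k + 1" .
    then have "k = 1" using False by linarith
    then show ?thesis using e False by auto
  qed simp
next
  have b: "snake_start n S 1 + 1 + 1 \<le> n - 1" using snake_end_bound[of 1 n S] n by simp
  fix v assume "v \<in> {0, snake_start n S 1 + 1}"
  then consider "v = 0" | "v = snake_start n S 1 + 1" by blast
  then show "v \<in> ear_tips n (snake n S)"
  proof cases
    case 1
    have "prev_vertex n 0 = n - 1" "next_vertex n 0 = 1" using n
      by (auto simp: prev_vertex_eq next_vertex_eq)
    then show ?thesis unfolding ear_tips_def 1 using n snake_longest[OF n]
      by (simp add: insert_commute)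
  next
    case 2
    then have "prev_vertex n v = snake_start n S 1" "next_vertex n v = snake_start n S 1 + 1 + 1"
      using b by (auto simp: prev_vertex_eq next_vertex_eq)
    then show ?thesis unfolding ear_tips_def using 2 b snake_memI[of 1 n S] n by simp
  qed
qed

lemma snake_two_eared: "4 \<le> n \<Longrightarrow> snake n S \<in> two_eared_triangulations n"
  unfolding two_eared_triangulations_def
  using triangulation_snake card_ears ear_tips_snake by simp

lemma snake_start_eq_if_snake_eq:
  assumes "snake n S = snake n S'" "1 \<le> k" "k \<le> n - 3"
  shows "snake_start n S k = snake_start n S' k"
proof -
  have "{snake_start n S k, snake_start n S k + k + 1} \<in> snake n S'"
    using snake_memI[OF assms(2,3), of S] unfolding assms(1) .
  then obtain j where "{snake_start n S k, snake_start n S k + k + 1}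
      = {snake_start n S' j, snake_start n S' j + j + 1}"
    unfolding snake_iff by blast
  from doubleton_eq_ordered[OF this] show ?thesis by auto
qed

lemma snake_inj:
  assumes "S \<subseteq> {1..<n - 3}" "S' \<subseteq> {1..<n - 3}" "snake n S = snake n S'"
  shows "S = S'"
proof -
  have "k \<in> S \<longleftrightarrow> k \<in> S'" if k: "k \<in> {1..<n - 3}" for k
  proof -
    have "snake_start n S k = snake_start n S' k"
      "snake_start n S (k + 1) = snake_start n S' (k + 1)"
      using snake_start_eq_if_snake_eq[OF assms(3)] k by auto
    moreover have "snake_start n S k = (if k \<in> S then 1 else 0) + snake_start n S (k + 1)"
      "snake_start n S' k = (if k \<in> S' then 1 else 0) + snake_start n S' (k + 1)"
      using snake_start_Suc k by auto
    ultimately show ?thesis by (auto split: if_splits)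
  qed
  then show ?thesis using assms(1,2) by blast
qed

section \<open>Two-eared triangulations are snakes\<close>

lemma crosses_short_diagonal:
  assumes "crosses {a, a + 2} e"
  shows "\<exists>x. e = {a + 1, x} \<and> (x < a \<or> a + 2 < x)"
proof -
  obtain A B C F where h: "{a, a + 2} = {A, B} \<and> e = {C, F} \<or> {a, a + 2} = {C, F} \<and> e = {A, B}"
    and o: "A < C" "C < B" "B < F"
    using assms unfolding crosses_def by blast
  from h show ?thesis
  proof
    assume e: "{a, a + 2} = {A, B} \<and> e = {C, F}"
    then have "A = a" "B = a + 2" using doubleton_eq_ordered[of a "a + 2" A B] o by auto
    then show ?thesis using e o by auto
  next
    assume e: "{a, a + 2} = {C, F} \<and> e = {A, B}"
    then have "C = a" "F = a + 2" using doubleton_eq_ordered[of a "a + 2" C F] o by auto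
    then show ?thesis using e o by (auto simp: insert_commute)
  qed
qed

lemma triangulation_ear_tip_between:
  assumes T: "triangulation n T" and n: "4 \<le> n"
  shows "{a, b} \<in> T \<Longrightarrow> a < b \<Longrightarrow> \<exists>v. a < v \<and> v < b \<and> {v - 1, v + 1} \<in> T"
proof (induction "b - a" arbitrary: a b rule: less_induct)
  case less
  have ab: "a + 2 \<le> b" "b < n"
    using diagonal_length less.prems triangulation_subset[OF T] by blast+
  show ?case
  proof (cases "b = a + 2 \<or> {a, a + 2} \<in> T")
    case True
    then show ?thesis using less.prems ab by (intro exI[of _ "a + 1"]) auto
  next
    case False
    have "{a, a + 2} \<notin> poly_sides n"
      using False ab n unfolding doubleton_in_poly_sides_iff by (auto simp: next_vertex_eq)
    then have "{a, a + 2} \<in> diagonals n" unfolding diagonals_def using False ab by force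
    then obtain e where e: "e \<in> T" "crosses {a, a + 2} e"
      using triangulation_maximal[OF T] False by blast
    obtain x where x: "e = {a + 1, x}" "x < a \<or> a + 2 < x"
      using crosses_short_diagonal[OF e(2)] by blast
    text \<open>As e cannot cross {a, b}, it lies inside it and a shorter diagonal is found.\<close>
    have "\<not> crosses e {a, b}" "\<not> crosses {a, b} e"
      using triangulation_not_crosses[OF T] e(1) less.prems(1) by blast+
    moreover have "x < a \<Longrightarrow> crosses e {a, b}"
      using crossesI[of x a "a + 1" b] ab False x(1) by (simp add: insert_commute)
    moreover have "b < x \<Longrightarrow> crosses {a, b} e"
      using crossesI[of a "a + 1" b x] ab False x(1) by simp
    ultimately have "\<not> x < a" "\<not> b < x" by blast+
    then have xb: "a + 2 < x" "x \<le> b" using x(2) by auto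
    then have "x - (a + 1) < b - a" by simp
    from less.hyps[OF this] e(1) x(1) xb obtain v where "a + 1 < v" "v < x" "{v - 1, v + 1} \<in> T"
      by auto
    then show ?thesis using \<open>x \<le> b\<close> by (intro exI[of _ v]) auto
  qed
qed

locale triangulation_tip_0 =
  fixes n :: nat and T :: "nat set set" and w :: nat
  assumes triangulation: "triangulation n T" and n: "4 \<le> n"
    and ear_tips: "ear_tips n T = {0, w}" and w_nonzero: "w \<noteq> 0"
begin

lemma longest: "{1, n - 1} \<in> T"
proof -
  have "{prev_vertex n 0, next_vertex n 0} \<in> T" using ear_tips unfolding ear_tips_def by auto
  moreover have "prev_vertex n 0 = n - 1" "next_vertex n 0 = 1"
    using n by (auto simp: prev_vertex_eq next_vertex_eq)
  ultimately show ?thesis by (simp add: insert_commute)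
qed

lemma diagonal_straddles_w:
  assumes "d \<in> T"
  shows "\<exists>a b. d = {a, b} \<and> 1 \<le> a \<and> a < w \<and> w < b \<and> b \<le> n - 1"
proof -
  have d: "d \<in> diagonals n" using assms triangulation triangulation_subset by blast
  then obtain a b where ab: "d = {a, b}" "a < b" "b < n" "{a, b} \<notin> poly_sides n"
    unfolding diagonals_def by blast
  have a2: "a + 2 \<le> b" using diagonal_length d ab by blast
  have "a \<noteq> 0"
  proof
    assume "a = 0"
    then have "b \<noteq> n - 1" using ab(3,4) unfolding doubleton_in_poly_sides_iff
      by (auto simp: next_vertex_eq)
    then have "crosses {a, b} {1, n - 1}" using \<open>a = 0\<close> a2 ab(3) n by (subst crosses_iff) auto
    then show False using triangulation_not_crosses[OF triangulation] assms longest ab(1) by blast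
  qed
  obtain v where v: "a < v" "v < b" "{v - 1, v + 1} \<in> T"
    using triangulation_ear_tip_between[OF triangulation n] assms ab by blast
  then have "v \<in> ear_tips n T"
    unfolding ear_tips_def using ab(3) by (simp add: prev_vertex_eq next_vertex_eq)
  then have "v = w" using ear_tips v(1) by auto
  then show ?thesis using ab v \<open>a \<noteq> 0\<close> by (intro exI[of _ a] exI[of _ b]) auto
qed

lemma diagonal_bounds:
  assumes "{a, b} \<in> T" "a < b"
  shows "1 \<le> a" "a < w" "w < b" "b \<le> n - 1"
proof -
  obtain x y where xy: "{a, b} = {x, y}" "1 \<le> x" "x < w" "w < y" "y \<le> n - 1"
    using diagonal_straddles_w[OF assms(1)] by blast
  then have "a = x \<and> b = y" using doubleton_eq_ordered[OF xy(1) assms(2)] by simp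
  then show "1 \<le> a" "a < w" "w < b" "b \<le> n - 1" using xy by simp_all
qed

lemma nested:
  assumes "{a, b} \<in> T" "{c, f} \<in> T" "a < w" "w < b" "c < w" "w < f"
  shows "(a \<le> c \<and> f \<le> b) \<or> (c \<le> a \<and> b \<le> f)"
  using triangulation_not_crosses[OF triangulation assms(1,2)] assms(3-6)
  by (subst (asm) crosses_iff) auto

definition has_length :: "nat \<Rightarrow> bool" where
  "has_length l \<longleftrightarrow> (\<exists>a. {a, a + l} \<in> T)"

lemma length_bounds:
  assumes "{a, a + l} \<in> T"
  shows "2 \<le> l" "l \<le> n - 2" "1 \<le> a" "a < w" "w < a + l" "a + l \<le> n - 1"
proof -
  have "a < a + l"
  proof (rule ccontr)
    assume "\<not> a < a + l"
    then have "{a} \<in> diagonals n" using assms triangulation triangulation_subset by auto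
    then obtain i j where "{a} = {i, j}" "i \<noteq> j" unfolding diagonals_iff by blast
    then show False by (metis insertCI singletonD)
  qed
  from diagonal_bounds[OF assms this] show "1 \<le> a" "a < w" "w < a + l" "a + l \<le> n - 1" by auto
  then show "2 \<le> l" "l \<le> n - 2" by auto
qed

lemma diagonal_length_unique:
  assumes "{a, a + l} \<in> T" "{c, c + l} \<in> T"
  shows "a = c"
  using nested[OF assms] length_bounds[OF assms(1)] length_bounds[OF assms(2)] by auto

lemma has_length_2: "has_length 2"
proof -
  have tip: "w < n" "{prev_vertex n w, next_vertex n w} \<in> T"
    using ear_tips unfolding ear_tips_def by auto
  have "w \<noteq> n - 1"
  proof
    assume "w = n - 1"
    then have "next_vertex n w = 0" using n by (simp add: next_vertex_eq)
    obtain a b where ab: "{prev_vertex n w, next_vertex n w} = {a, b}" "1 \<le> a" "w < b"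
      using diagonal_straddles_w[OF tip(2)] by blast
    have "0 \<in> {a, b}" using ab(1) \<open>next_vertex n w = 0\<close> by (metis insertCI)
    then show False using ab by auto
  qed
  then have "{prev_vertex n w, next_vertex n w} = {w - 1, w - 1 + 2}"
    using tip(1) w_nonzero by (auto simp: prev_vertex_eq next_vertex_eq)
  then show ?thesis unfolding has_length_def using tip(2) by metis
qed

lemma has_length_n_minus_2: "has_length (n - 2)"
proof -
  have "1 + (n - 2) = n - 1" using n by simp
  then show ?thesis unfolding has_length_def using longest by metis
qed

text \<open>
  Between the lengths of two diagonals there is the length of a third: a diagonal of an
  intermediate length fitting between the two nested ones is either in T or crosses a diagonal
  of T whose length lies strictly between them.
\<close>
lemma has_length_between:
  assumes d1: "{a1, a1 + l1} \<in> T" and d2: "{a2, a2 + l2} \<in> T" and l: "l1 < L" "L < l2"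
  shows "\<exists>l. l1 < l \<and> l < l2 \<and> has_length l"
proof -
  note b1 = length_bounds[OF d1] and b2 = length_bounds[OF d2]
  have nest: "a2 \<le> a1" "a1 + l1 \<le> a2 + l2" using nested[OF d1 d2 b1(4,5) b2(4,5)] l by auto
  define c where "c = (if L + a2 \<le> a1 + l1 then a1 + l1 - L else a2)"
  have c: "a2 \<le> c" "c \<le> a1" "a1 + l1 \<le> c + L" "c + L \<le> a2 + l2"
    unfolding c_def using nest l by auto
  show ?thesis
  proof (cases "{c, c + L} \<in> T")
    case True
    then show ?thesis using l unfolding has_length_def by blast
  next
    case False
    have "{c, c + L} \<in> diagonals n" using inner_diagonal c b1 b2 l by simp
    then obtain f where f: "f \<in> T" "crosses {c, c + L} f"
      using triangulation_maximal[OF triangulation] False by blast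
    obtain p q where pq: "f = {p, q}" "p < w" "w < q"
      using diagonal_straddles_w[OF f(1)] by blast
    have "\<not> (q - p \<le> l1)"
    proof
      assume "q - p \<le> l1"
      then have "c \<le> p" "q \<le> c + L" using nested[OF d1 f(1)[unfolded pq(1)] b1(4,5) pq(2,3)] c
        by auto
      then show False using f(2) pq crosses_commute nested_not_crosses[of p q c "c + L"] by auto
    qed
    moreover have "\<not> (l2 \<le> q - p)"
    proof
      assume "l2 \<le> q - p"
      then have "p \<le> c" "c + L \<le> q"
        using nested[OF d2 f(1)[unfolded pq(1)] b2(4,5) pq(2,3)] c l pq(2,3) by auto
      then show False using f(2) pq nested_not_crosses[of c "c + L" p q] l by auto
    qed
    moreover have "has_length (q - p)"
      unfolding has_length_def using f(1) pq less_trans[OF pq(2,3)] by (intro exI[of _ p]) simp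
    ultimately show ?thesis by (intro exI[of _ "q - p"]) auto
  qed
qed

lemma has_length_all:
  assumes "2 \<le> L" "L \<le> n - 2"
  shows "has_length L"
proof (rule ccontr)
  assume no_L: "\<not> has_length L"
  define A where "A = {l. l < L \<and> has_length l}"
  define B where "B = {l. L < l \<and> l \<le> n - 2 \<and> has_length l}"
  have L: "2 < L" "L < n - 2"
    using no_L has_length_2 has_length_n_minus_2 assms by (auto simp: le_less)
  have A: "finite A" "A \<noteq> {}" unfolding A_def using has_length_2 L by auto
  have B: "finite B" "B \<noteq> {}" unfolding B_def using has_length_n_minus_2 L by auto
  obtain a1 a2 where "{a1, a1 + Max A} \<in> T" "{a2, a2 + Min B} \<in> T"
    using Max_in[OF A] Min_in[OF B] unfolding A_def B_def has_length_def by auto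
  moreover have "Max A < L" "L < Min B" using Max_in[OF A] Min_in[OF B] unfolding A_def B_def
    by auto
  ultimately obtain l where l: "Max A < l" "l < Min B" "has_length l" using has_length_between
    by blast
  then have "l < L \<or> L < l" using no_L by (metis nat_neq_iff)
  moreover have "l \<le> n - 2"
    using l(3) length_bounds unfolding has_length_def by blast
  ultimately show False
    using l Max_ge[OF A(1)] Min_le[OF B(1)] unfolding A_def B_def by fastforce
qed

definition left_end :: "nat \<Rightarrow> nat" where
  "left_end l = (THE a. {a, a + l} \<in> T)"

lemma left_end_eq: "{a, a + l} \<in> T \<Longrightarrow> left_end l = a"
  unfolding left_end_def using diagonal_length_unique by blast

lemma left_end_in: "2 \<le> l \<Longrightarrow> l \<le> n - 2 \<Longrightarrow> {left_end l, left_end l + l} \<in> T"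
  using has_length_all left_end_eq unfolding has_length_def by metis

definition gap_set :: "nat set" where
  "gap_set = {k \<in> {1..<n - 3}. left_end (k + 1) = left_end (k + 2) + 1}"

lemma left_end_eq_snake_start:
  assumes "1 \<le> k" "k \<le> n - 3"
  shows "left_end (k + 1) = snake_start n gap_set k"
  using assms(2,1)
proof (induction k rule: inc_induct)
  case base
  have "1 + (n - 3 + 1) = n - 1" using n by simp
  then have "left_end (n - 3 + 1) = 1" using longest by (intro left_end_eq) simp
  then show ?case using snake_start_top by simp
next
  case (step k)
  let ?p = "left_end (k + 1)" and ?q = "left_end (k + 2)"
  have p: "{?p, ?p + (k + 1)} \<in> T" and q: "{?q, ?q + (k + 2)} \<in> T"
    using left_end_in[of "k + 1"] left_end_in[of "k + 2"] step n by simp_all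
  have "?q \<le> ?p" "?p \<le> ?q + 1"
    using nested[OF p q] length_bounds[OF p] length_bounds[OF q] by auto
  moreover have "k \<in> gap_set \<longleftrightarrow> ?p = ?q + 1" unfolding gap_set_def using step by auto
  ultimately have "?p = (if k \<in> gap_set then 1 else 0) + ?q" by auto
  then show ?case using snake_start_Suc[OF step.hyps(2)] step.IH step.prems by simp
qed

lemma eq_snake: "T = snake n gap_set"
proof (intro equalityI subsetI)
  fix d assume d: "d \<in> T"
  obtain a b where ab: "d = {a, b}" "a < w" "w < b" using diagonal_straddles_w[OF d] by blast
  define l where "l = b - a"
  have dT: "{a, a + l} \<in> T" using d ab unfolding l_def by simp
  note bounds = length_bounds[OF dT]
  have "left_end ((l - 1) + 1) = snake_start n gap_set (l - 1)"
    by (rule left_end_eq_snake_start) (use bounds in auto)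
  then have "snake_start n gap_set (l - 1) = a" using left_end_eq[OF dT] bounds by simp
  moreover have "d = {a, a + (l - 1) + 1}" using ab bounds unfolding l_def by simp
  ultimately show "d \<in> snake n gap_set" using snake_memI[of "l - 1" n gap_set] bounds by simp
next
  fix d assume "d \<in> snake n gap_set"
  then obtain k where k: "1 \<le> k" "k \<le> n - 3"
      "d = {snake_start n gap_set k, snake_start n gap_set k + k + 1}"
    unfolding snake_iff by blast
  then show "d \<in> T"
    using left_end_eq_snake_start[OF k(1,2)] left_end_in[of "k + 1"] n by (simp add: add.assoc)
qed

lemma gap_set_subset: "gap_set \<subseteq> {1..<n - 3}"
  unfolding gap_set_def by auto

end

lemma triangulation_with_tip_0_is_snake:
  assumes T: "triangulation n T" and n: "4 \<le> n" and tips: "card (ear_tips n T) = 2"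
    "0 \<in> ear_tips n T"
  shows "\<exists>S \<subseteq> {1..<n - 3}. T = snake n S"
proof -
  obtain w where w: "ear_tips n T = {0, w}" "w \<noteq> 0"
    using tips by (metis card_2_iff insert_commute insertE singletonD)
  interpret triangulation_tip_0 n T w using T n w by unfold_locales
  show ?thesis using eq_snake gap_set_subset by blast
qed

section \<open>Compositions and their gap sets\<close>

definition gap_compl :: "nat \<Rightarrow> nat set \<Rightarrow> nat set" where
  "gap_compl m S = {1..<m} - S"

definition gap_mirror :: "nat \<Rightarrow> nat set \<Rightarrow> nat set" where
  "gap_mirror m S = (\<lambda>s. m - s) ` S"

definition gap_orbit :: "nat \<Rightarrow> nat set \<Rightarrow> nat set set" where
  "gap_orbit m S = {S, gap_compl m S, gap_mirror m S, gap_compl m (gap_mirror m S)}"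

lemma gap_compl_subset: "gap_compl m S \<subseteq> {1..<m}"
  unfolding gap_compl_def by auto

lemma gap_mirror_subset: "S \<subseteq> {1..<m} \<Longrightarrow> gap_mirror m S \<subseteq> {1..<m}"
  unfolding gap_mirror_def by fastforce

lemma gap_compl_compl: "S \<subseteq> {1..<m} \<Longrightarrow> gap_compl m (gap_compl m S) = S"
  unfolding gap_compl_def by auto

lemma gap_mirror_mirror:
  assumes "S \<subseteq> {1..<m}"
  shows "gap_mirror m (gap_mirror m S) = S"
proof -
  have "m - (m - s) = s" if "s \<in> S" for s using that assms by auto
  then show ?thesis unfolding gap_mirror_def image_image by simp
qed

lemma image_diff_atLeastLessThan: "(\<lambda>i. m - i) ` {1..<m} = {1..<m::nat}"
proof (intro equalityI subsetI)
  fix x assume "x \<in> {1..<m}"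
  then have "x = m - (m - x)" "m - x \<in> {1..<m}" by auto
  then show "x \<in> (\<lambda>i. m - i) ` {1..<m}" by blast
qed auto

lemma gap_compl_mirror:
  assumes "S \<subseteq> {1..<m}"
  shows "gap_compl m (gap_mirror m S) = gap_mirror m (gap_compl m S)"
proof -
  have "inj_on (\<lambda>s. m - s) {1..<m}" by (rule inj_onI) auto
  moreover have "(\<lambda>s. m - s) ` {1..<m} = {1..<m}" by (rule image_diff_atLeastLessThan)
  ultimately show ?thesis
    unfolding gap_compl_def gap_mirror_def using assms by (simp add: inj_on_image_set_diff)
qed

lemma gap_orbit_self: "S \<in> gap_orbit m S"
  unfolding gap_orbit_def by simp

lemma gap_orbit_closed:
  assumes S: "S \<subseteq> {1..<m}" and X: "X \<in> gap_orbit m S"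
  shows "gap_compl m X \<in> gap_orbit m S \<and> gap_mirror m X \<in> gap_orbit m S"
proof -
  have MS: "gap_mirror m S \<subseteq> {1..<m}" by (rule gap_mirror_subset[OF S])
  from X consider "X = S" | "X = gap_compl m S" | "X = gap_mirror m S"
    | "X = gap_compl m (gap_mirror m S)"
    unfolding gap_orbit_def by blast
  then show ?thesis
  proof cases
    case 2
    then show ?thesis using gap_compl_compl[OF S] gap_compl_mirror[OF S] unfolding gap_orbit_def
      by auto
  next
    case 3
    then show ?thesis using gap_mirror_mirror[OF S] unfolding gap_orbit_def by auto
  next
    case 4
    then have "gap_mirror m X = gap_compl m S"
      using gap_compl_mirror[OF MS] gap_mirror_mirror[OF S] by simp
    then show ?thesis using 4 gap_compl_compl[OF MS] unfolding gap_orbit_def by auto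
  qed (auto simp: gap_orbit_def)
qed

lemma gap_orbit_if_mirror_compl:
  assumes S: "S \<subseteq> {1..<m}" and S': "S' \<subseteq> {1..<m}"
    and "gap_mirror m (gap_compl m S') \<in> {S, gap_compl m S}"
  shows "S' \<in> gap_orbit m S"
proof -
  have "gap_compl m S' \<in> {gap_mirror m S, gap_mirror m (gap_compl m S)}"
    using assms(3) gap_mirror_mirror[OF gap_compl_subset, of m S'] by auto
  moreover have "gap_compl m (gap_mirror m (gap_compl m S)) = gap_mirror m S"
    using gap_compl_mirror[OF gap_compl_subset, of m S] gap_compl_compl[OF S] by simp
  ultimately show ?thesis
    using gap_compl_compl[OF S'] unfolding gap_orbit_def by auto
qed

definition prefix_sum :: "nat list \<Rightarrow> nat \<Rightarrow> nat" where
  "prefix_sum xs i = sum_list (take i xs)"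

lemma comp_gaps_eq: "comp_gaps xs = prefix_sum xs ` {1..<length xs}"
  unfolding comp_gaps_def prefix_sum_def by auto

lemma prefix_sum_0 [simp]: "prefix_sum xs 0 = 0"
  unfolding prefix_sum_def by simp

lemma prefix_sum_length [simp]: "prefix_sum xs (length xs) = sum_list xs"
  unfolding prefix_sum_def by simp

lemma prefix_sum_Suc: "i < length xs \<Longrightarrow> prefix_sum xs (Suc i) = prefix_sum xs i + xs ! i"
  unfolding prefix_sum_def by (simp add: take_Suc_conv_app_nth)

lemma prefix_sum_strict_mono:
  assumes "\<forall>x\<in>set xs. 0 < x" "i < j" "j \<le> length xs"
  shows "prefix_sum xs i < prefix_sum xs j"
  using assms(2,3)
proof (induction j)
  case (Suc j)
  then have "0 < xs ! j" using assms(1) by auto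
  then show ?case using Suc prefix_sum_Suc[of j xs] by (cases "i = j") auto
qed simp

lemma comp_gaps_subset:
  assumes "xs \<in> compositions m"
  shows "comp_gaps xs \<subseteq> {1..<m}"
proof
  fix s assume "s \<in> comp_gaps xs"
  then obtain i where "i \<in> {1..<length xs}" "s = prefix_sum xs i" unfolding comp_gaps_eq by blast
  then have i: "0 < i" "i < length xs" "s = prefix_sum xs i" by auto
  have "\<forall>x\<in>set xs. 0 < x" "sum_list xs = m" using assms unfolding compositions_def by auto
  then show "s \<in> {1..<m}"
    using prefix_sum_strict_mono[of xs 0 i] prefix_sum_strict_mono[of xs i "length xs"] i by auto
qed

lemma gaps_comp_comp_gaps:
  assumes "xs \<in> compositions m" "1 \<le> m"
  shows "gaps_comp m (comp_gaps xs) = xs"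
proof -
  have pos: "\<forall>x\<in>set xs. 0 < x" and sum: "sum_list xs = m" using assms unfolding compositions_def
    by auto
  let ?L = "length xs"
  have "1 \<le> ?L" using sum assms(2) by (cases xs) auto
  then have upt: "[0..<?L + 1] = 0 # [1..<?L] @ [?L]"
    by (metis Suc_eq_plus1 add_0 upt_Suc_append upt_conv_Cons zero_less_Suc le_add_diff_inverse2
        less_one not_less)
  have "sorted_wrt (<) (map (prefix_sum xs) [1..<?L])"
    unfolding sorted_wrt_map
    by (rule sorted_wrt_mono_rel[OF _ sorted_wrt_upt]) (use prefix_sum_strict_mono[OF pos] in auto)
  then have "sorted_list_of_set (set (map (prefix_sum xs) [1..<?L])) = map (prefix_sum xs) [1..<?L]"
    unfolding sorted_list_of_set_sort_remdups strict_sorted_iff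
    by (simp add: distinct_remdups_id sorted_sort_id)
  then have "sorted_list_of_set (comp_gaps xs) = map (prefix_sum xs) [1..<?L]"
    unfolding comp_gaps_eq by simp
  then have ps: "0 # sorted_list_of_set (comp_gaps xs) @ [m] = map (prefix_sum xs) [0..<?L + 1]"
    unfolding upt using sum by simp
  have "map (\<lambda>i. map (prefix_sum xs) [0..<?L + 1] ! (i + 1) - map (prefix_sum xs) [0..<?L + 1] ! i)
      [0..<?L] = xs"
    by (rule nth_equalityI) (simp_all add: nth_append prefix_sum_Suc del: upt_Suc)
  then show ?thesis unfolding gaps_comp_def Let_def ps by simp
qed

lemma comp_gaps_inj: "1 \<le> m \<Longrightarrow> inj_on comp_gaps (compositions m)"
  using gaps_comp_comp_gaps by (metis inj_onI)

lemma comp_gaps_Cons: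
  assumes "xs \<noteq> []"
  shows "comp_gaps (x # xs) = insert x ((+) x ` comp_gaps xs)"
proof -
  have "comp_gaps (x # xs) = prefix_sum (x # xs) ` Suc ` {0..<length xs}"
    unfolding comp_gaps_eq by (simp add: image_Suc_atLeastLessThan)
  also have "\<dots> = (\<lambda>j. x + prefix_sum xs j) ` {0..<length xs}"
    unfolding image_image prefix_sum_def by simp
  also have "{0..<length xs} = insert 0 {1..<length xs}" using assms by auto
  finally show ?thesis unfolding comp_gaps_eq image_image by simp
qed

lemma comp_gaps_surj: "1 \<le> m \<Longrightarrow> S \<subseteq> {1..<m} \<Longrightarrow> \<exists>xs\<in>compositions m. comp_gaps xs = S"
proof (induction m arbitrary: S rule: less_induct)
  case (less m)
  show ?case
  proof (cases "S = {}")
    case True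
    have "[m] \<in> compositions m" "comp_gaps [m] = {}"
      unfolding compositions_def comp_gaps_def using less.prems by auto
    then show ?thesis using True by blast
  next
    case False
    text \<open>Split off the first part, which is the least gap.\<close>
    define x where "x = Min S"
    have fin: "finite S" using less.prems finite_subset by blast
    have x: "x \<in> S" "\<And>s. s \<in> S \<Longrightarrow> x \<le> s" unfolding x_def using fin False by auto
    have "1 \<le> x" "x < m" using x less.prems by auto
    define S' where "S' = (\<lambda>s. s - x) ` (S - {x})"
    have "S' \<subseteq> {1..<m - x}"
      unfolding S'_def using x less.prems by (force simp: le_less)
    moreover have "m - x < m" "1 \<le> m - x" using \<open>1 \<le> x\<close> \<open>x < m\<close> by auto
    ultimately obtain ys where ys: "ys \<in> compositions (m - x)" "comp_gaps ys = S'"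
      using less.IH by blast
    have "ys \<noteq> []" using ys(1) \<open>x < m\<close> unfolding compositions_def by auto
    moreover have "(+) x ` S' = S - {x}"
      unfolding S'_def image_image using x by (force intro: image_eqI)
    ultimately have "comp_gaps (x # ys) = S"
      unfolding comp_gaps_Cons[OF \<open>ys \<noteq> []\<close>] using ys(2) x(1) by auto
    moreover have "x # ys \<in> compositions m"
      using ys(1) \<open>1 \<le> x\<close> \<open>x < m\<close> unfolding compositions_def by auto
    ultimately show ?thesis by blast
  qed
qed

lemma rev_in_compositions: "xs \<in> compositions m \<Longrightarrow> rev xs \<in> compositions m"
  unfolding compositions_def by (simp add: sum_list_rev)

lemma comp_gaps_rev:
  assumes "xs \<in> compositions m"
  shows "comp_gaps (rev xs) = gap_mirror m (comp_gaps xs)"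
proof -
  let ?L = "length xs"
  have sum: "sum_list xs = m" using assms unfolding compositions_def by auto
  have "prefix_sum (rev xs) i = m - prefix_sum xs (?L - i)" if "i \<le> ?L" for i
  proof -
    have "prefix_sum xs (?L - i) + sum_list (drop (?L - i) xs) = m"
      unfolding prefix_sum_def using sum by (metis append_take_drop_id sum_list_append)
    then show ?thesis unfolding prefix_sum_def by (simp add: take_rev sum_list_rev)
  qed
  then have "comp_gaps (rev xs) = (\<lambda>s. m - s) ` prefix_sum xs ` (\<lambda>i. ?L - i) ` {1..<?L}"
    unfolding comp_gaps_eq length_rev image_image by (intro image_cong) auto
  then show ?thesis unfolding image_diff_atLeastLessThan gap_mirror_def comp_gaps_eq .
qed

lemma comp_gaps_conjugate:
  assumes "xs \<in> compositions m" "1 \<le> m"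
  shows "conjugate m xs \<in> compositions m" "comp_gaps (conjugate m xs) = gap_compl m (comp_gaps xs)"
proof -
  obtain ys where ys: "ys \<in> compositions m" "comp_gaps ys = gap_compl m (comp_gaps xs)"
    using comp_gaps_surj[OF assms(2) gap_compl_subset] by blast
  have "conjugate m xs = ys"
    unfolding conjugate_def gap_compl_def[symmetric] ys(2)[symmetric]
    by (rule gaps_comp_comp_gaps[OF ys(1) assms(2)])
  then show "conjugate m xs \<in> compositions m"
    "comp_gaps (conjugate m xs) = gap_compl m (comp_gaps xs)"
    using ys by auto
qed

lemma comp_step_gaps:
  assumes "1 \<le> m" "(ys, zs) \<in> comp_step m"
  shows "ys \<in> compositions m" "zs \<in> compositions m"
    "comp_gaps zs = gap_compl m (comp_gaps ys) \<or> comp_gaps zs = gap_mirror m (comp_gaps ys)"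
  using assms(2) comp_gaps_conjugate[OF _ assms(1)] rev_in_compositions comp_gaps_rev
  unfolding comp_step_def by auto

lemma gap_orbit_if_comp_equiv:
  assumes m: "1 \<le> m" and xs: "xs \<in> compositions m" and "(xs, ys) \<in> comp_equiv m"
  shows "ys \<in> compositions m \<and> comp_gaps ys \<in> gap_orbit m (comp_gaps xs)"
  using assms(3) unfolding comp_equiv_def
proof (induction rule: rtrancl_induct)
  case base
  then show ?case using xs gap_orbit_self by blast
next
  case (step y z)
  have G: "comp_gaps xs \<subseteq> {1..<m}" by (rule comp_gaps_subset[OF xs])
  have Y: "comp_gaps y \<in> gap_orbit m (comp_gaps xs)" using step.IH by blast
  from step.hyps(2) show ?case
  proof
    assume "(y, z) \<in> comp_step m"
    then show ?thesis using comp_step_gaps[OF m] gap_orbit_closed[OF G Y] by metis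
  next
    assume "(y, z) \<in> (comp_step m)\<inverse>"
    then have st: "(z, y) \<in> comp_step m" by simp
    have Z: "comp_gaps z \<subseteq> {1..<m}" by (rule comp_gaps_subset[OF comp_step_gaps(1)[OF m st]])
    have "comp_gaps z = gap_compl m (comp_gaps y) \<or> comp_gaps z = gap_mirror m (comp_gaps y)"
      using comp_step_gaps(3)[OF m st] gap_compl_compl[OF Z] gap_mirror_mirror[OF Z] by auto
    then show ?thesis using comp_step_gaps(1)[OF m st] gap_orbit_closed[OF G Y] by auto
  qed
qed

lemma comp_equiv_if_gap_orbit:
  assumes m: "1 \<le> m" and xs: "xs \<in> compositions m" and ys: "ys \<in> compositions m"
    and orbit: "comp_gaps ys \<in> gap_orbit m (comp_gaps xs)"
  shows "(xs, ys) \<in> comp_equiv m"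
proof -
  have conj: "(y, conjugate m y) \<in> comp_equiv m" and rev: "(y, rev y) \<in> comp_equiv m"
    if "y \<in> compositions m" for y
    using that unfolding comp_equiv_def comp_step_def by blast+
  have eq: "y = z" if "y \<in> compositions m" "z \<in> compositions m" "comp_gaps y = comp_gaps z" for y z
    using comp_gaps_inj[OF m] that by (auto dest: inj_onD)
  have rxs: "rev xs \<in> compositions m" by (rule rev_in_compositions[OF xs])
  from orbit consider "comp_gaps ys = comp_gaps xs" | "comp_gaps ys = gap_compl m (comp_gaps xs)"
    | "comp_gaps ys = gap_mirror m (comp_gaps xs)"
    | "comp_gaps ys = gap_compl m (gap_mirror m (comp_gaps xs))"
    unfolding gap_orbit_def by blast
  then show ?thesis
  proof cases
    case 1
    then show ?thesis using eq[OF ys xs] unfolding comp_equiv_def by simp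
  next
    case 2
    then show ?thesis
      using eq[OF ys comp_gaps_conjugate(1)[OF xs m]] comp_gaps_conjugate(2)[OF xs m] conj[OF xs]
        by simp
  next
    case 3
    then show ?thesis using eq[OF ys rxs] comp_gaps_rev[OF xs] rev[OF xs] by simp
  next
    case 4
    then have "ys = conjugate m (rev xs)"
      using eq[OF ys comp_gaps_conjugate(1)[OF rxs m]] comp_gaps_conjugate(2)[OF rxs m]
        comp_gaps_rev[OF xs] by simp
    then show ?thesis using rev[OF xs] conj[OF rxs] unfolding comp_equiv_def by simp
  qed
qed

lemma comp_equiv_iff_gap_orbit:
  assumes "1 \<le> m" "xs \<in> compositions m" "ys \<in> compositions m"
  shows "(xs, ys) \<in> comp_equiv m \<longleftrightarrow> comp_gaps ys \<in> gap_orbit m (comp_gaps xs)"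
  using gap_orbit_if_comp_equiv comp_equiv_if_gap_orbit assms by blast

lemma equiv_comp_equiv: "equiv UNIV (comp_equiv m)"
  unfolding comp_equiv_def equiv_def
  by (simp add: refl_rtrancl sym_rtrancl[OF sym_Un_converse] trans_rtrancl)

section \<open>Symmetries of snakes\<close>

lemma snake_start_gap_compl:
  assumes "1 \<le> k" "k \<le> n - 3"
  shows "snake_start n (gap_compl (n - 3) S) k + snake_start n S k + k + 1 = n"
  using assms(2,1)
proof (induction k rule: inc_induct)
  case base
  then show ?case using snake_start_top[of n] by simp
next
  case (step k)
  have "k \<in> gap_compl (n - 3) S \<longleftrightarrow> k \<notin> S" unfolding gap_compl_def using step by auto
  then show ?case
    using snake_start_Suc[OF step.hyps(2), of S]
      snake_start_Suc[OF step.hyps(2), of "gap_compl (n - 3) S"] step.IH step.prems by auto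
qed

lemma act_reflection_snake:
  assumes "4 \<le> n"
  shows "act (reflection n 0) (snake n S) = snake n (gap_compl (n - 3) S)"
proof -
  have "reflection n 0 ` {snake_start n S k, snake_start n S k + k + 1}
      = {snake_start n (gap_compl (n - 3) S) k, snake_start n (gap_compl (n - 3) S) k + k + 1}"
    if "k \<in> {1..n - 3}" for k
    using snake_start_gap_compl[of k n S] snake_end_bound[of k n S] snake_start_ge_1[of n S k] that
    unfolding reflection_def by auto
  then show ?thesis unfolding act_def snake_image image_image by (rule image_cong[OF refl])
qed

lemma snake_start_gap_mirror_compl:
  assumes "1 \<le> k" "k \<le> n - 3"
  shows "snake_start n (gap_mirror (n - 3) (gap_compl (n - 3) S)) k + snake_start n S 1
       = snake_start n S (n - 2 - k) + (n - 2 - k)"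
  using assms(2,1)
proof (induction k rule: inc_induct)
  case base
  then have "n - 2 - (n - 3) = 1" by simp
  then show ?case using snake_start_top[of n] by simp
next
  case (step k)
  let ?R = "gap_mirror (n - 3) (gap_compl (n - 3) S)"
  define j where "j = n - 2 - k"
  have j: "2 \<le> j" "j - 1 = n - 2 - (k + 1)" "j - 1 < n - 3" "j - 1 \<in> {1..<n - 3}"
    using step unfolding j_def by auto
  have "k \<in> ?R \<longleftrightarrow> j - 1 \<notin> S"
  proof
    assume "k \<in> ?R"
    then obtain s where "s \<in> {1..<n - 3}" "s \<notin> S" "k = n - 3 - s"
      unfolding gap_mirror_def gap_compl_def by blast
    moreover from this have "s = j - 1" unfolding j_def by auto
    ultimately show "j - 1 \<notin> S" by simp
  next
    assume "j - 1 \<notin> S"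
    moreover have "k = n - 3 - (j - 1)" using step j unfolding j_def by auto
    ultimately show "k \<in> ?R" using j(4) unfolding gap_mirror_def gap_compl_def by blast
  qed
  moreover have "snake_start n S (j - 1) = (if j - 1 \<in> S then 1 else 0) + snake_start n S j"
    using snake_start_Suc[OF j(3)] j(1) by simp
  moreover have "snake_start n ?R (k + 1) + snake_start n S 1 = snake_start n S (j - 1) + (j - 1)"
    using step.IH step.prems j(2) by simp
  ultimately show ?case
    using snake_start_Suc[OF step.hyps(2), of ?R] j(1) unfolding j_def[symmetric] by auto
qed

lemma act_rotation_snake:
  assumes n: "4 \<le> n"
  shows "act (rotation n (n - (snake_start n S 1 + 1))) (snake n S)
       = snake n (gap_mirror (n - 3) (gap_compl (n - 3) S))"
proof -
  let ?w = "snake_start n S 1 + 1" and ?R = "gap_mirror (n - 3) (gap_compl (n - 3) S)"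
  let ?r = "rotation n (n - ?w)"
  have w: "?w + 1 \<le> n - 1" using snake_end_bound[of 1 n S] n by simp
  text \<open>The rotation maps the diagonal of length j + 1 to the one of length n - 1 - j.\<close>
  have "?r ` {snake_start n S j, snake_start n S j + j + 1}
      = {snake_start n ?R (n - 2 - j), snake_start n ?R (n - 2 - j) + (n - 2 - j) + 1}"
    if j: "j \<in> {1..n - 3}" for j
  proof -
    have kj: "1 \<le> n - 2 - j" "n - 2 - j \<le> n - 3" "n - 2 - (n - 2 - j) = j" using j by auto
    have e: "snake_start n ?R (n - 2 - j) + snake_start n S 1 = snake_start n S j + j"
      using snake_start_gap_mirror_compl[OF kj(1,2), of S] unfolding kj(3) .
    have m: "snake_start n S j \<le> snake_start n S 1" "?w + 1 \<le> snake_start n S j + j + 1"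
      using snake_start_antimono[of 1 j n S] snake_end_mono[of 1 j n S] j by auto
    have b: "snake_start n S j + j + 1 \<le> n - 1" using snake_end_bound[of j n S] j by auto
    have "?r (snake_start n S j) = snake_start n S j + (n - ?w)"
      unfolding rotation_def using m w by simp
    moreover have "?r (snake_start n S j + j + 1) = snake_start n S j + j + 1 - ?w"
    proof -
      have eq: "snake_start n S j + j + 1 + (n - ?w) = (snake_start n S j + j + 1 - ?w) + n"
        using m w by simp
      have "snake_start n S j + j + 1 - ?w < n" using b by simp
      then show ?thesis unfolding rotation_def eq by simp
    qed
    moreover have "snake_start n ?R (n - 2 - j) = snake_start n S j + j + 1 - ?w" using e m by simp
    moreover have "snake_start n ?R (n - 2 - j) + (n - 2 - j) + 1 = snake_start n S j + (n - ?w)"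
      using e m kj(1,2) w by linarith
    ultimately show ?thesis by auto
  qed
  then have "act ?r (snake n S)
      = (\<lambda>k. {snake_start n ?R k, snake_start n ?R k + k + 1}) ` ((\<lambda>j. n - 2 - j) ` {1..n - 3})"
    unfolding act_def snake_image image_image by simp
  also have "(\<lambda>j. n - 2 - j) ` {1..n - 3} = {1..n - 3}"
  proof (intro equalityI subsetI)
    fix x assume "x \<in> {1..n - 3}"
    then have "x = n - 2 - (n - 2 - x)" "n - 2 - x \<in> {1..n - 3}" by auto
    then show "x \<in> (\<lambda>j. n - 2 - j) ` {1..n - 3}" by blast
  qed auto
  finally show ?thesis unfolding snake_image .
qed

lemma snake_class_gap_compl:
  assumes "4 \<le> n"
  shows "symmetry_rel n `` {snake n (gap_compl (n - 3) S)} = symmetry_rel n `` {snake n S}"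
proof -
  have "reflection n 0 \<in> dihedral n" using assms by (simp add: reflection_in_dihedral)
  then have "symmetry_rel n `` {act (reflection n 0) (snake n S)} = symmetry_rel n `` {snake n S}"
    by (rule symmetry_class_act[rotated 2])
      (use assms snake_two_eared act_reflection_snake in auto)
  then show ?thesis using act_reflection_snake[OF assms] by simp
qed

lemma snake_class_gap_mirror_compl:
  assumes "4 \<le> n"
  shows "symmetry_rel n `` {snake n (gap_mirror (n - 3) (gap_compl (n - 3) S))}
       = symmetry_rel n `` {snake n S}"
proof -
  have "rotation n (n - (snake_start n S 1 + 1)) \<in> dihedral n"
    using assms by (simp add: rotation_in_dihedral)
  then have "symmetry_rel n `` {act (rotation n (n - (snake_start n S 1 + 1))) (snake n S)}
      = symmetry_rel n `` {snake n S}"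
    by (rule symmetry_class_act[rotated 2])
      (use assms snake_two_eared act_rotation_snake in auto)
  then show ?thesis using act_rotation_snake[OF assms] by simp
qed

lemma snake_class_eq_if_gap_orbit:
  assumes n: "4 \<le> n" and S: "S \<subseteq> {1..<n - 3}" and "S' \<in> gap_orbit (n - 3) S"
  shows "symmetry_rel n `` {snake n S'} = symmetry_rel n `` {snake n S}"
proof -
  have mirror: "symmetry_rel n `` {snake n (gap_mirror (n - 3) X)} = symmetry_rel n `` {snake n X}"
    if "X \<subseteq> {1..<n - 3}" for X
    using snake_class_gap_mirror_compl[OF n, of "gap_compl (n - 3) X"]
      snake_class_gap_compl[OF n, of X] gap_compl_compl[OF that] by simp
  from assms(3) consider "S' = S" | "S' = gap_compl (n - 3) S" | "S' = gap_mirror (n - 3) S"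
    | "S' = gap_compl (n - 3) (gap_mirror (n - 3) S)"
    unfolding gap_orbit_def by blast
  then show ?thesis
    by cases (simp_all add: snake_class_gap_compl[OF n] mirror[OF S] gap_compl_mirror[OF S]
        snake_class_gap_mirror_compl[OF n])
qed

lemma snake_eq_act_fixing_0:
  assumes n: "4 \<le> n" and S: "S \<subseteq> {1..<n - 3}" and S': "S' \<subseteq> {1..<n - 3}"
    and g: "g \<in> dihedral n" "g 0 = 0" and eq: "snake n S' = act g (snake n S)"
  shows "S' = S \<or> S' = gap_compl (n - 3) S"
proof -
  have "(\<forall>i<n. g i = i) \<or> (\<forall>i<n. g i = reflection n 0 i)"
    using dihedral_fixing_0 g n by simp
  then have "snake n S' = snake n S \<or> snake n S' = snake n (gap_compl (n - 3) S)"
    using eq act_ident act_cong[of "snake n S" n g "reflection n 0"] act_reflection_snake[OF n]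
      snake_subset_diagonals[OF n] by metis
  then show ?thesis using snake_inj[OF S' S] snake_inj[OF S' gap_compl_subset] by blast
qed

lemma snake_eq_act_if_class_eq:
  assumes n: "4 \<le> n" and eq: "symmetry_rel n `` {snake n S} = symmetry_rel n `` {snake n S'}"
  shows "\<exists>h\<in>dihedral n. snake n S' = act h (snake n S)"
proof -
  have "rotation n 0 \<in> dihedral n" "act (rotation n 0) (snake n S') = snake n S'"
    using n act_ident[OF snake_subset_diagonals[OF n]]
    by (auto simp: rotation_in_dihedral rotation_def)
  then have "snake n S' \<in> symmetry_rel n `` {snake n S'}"
    unfolding symmetry_class_eq[OF snake_two_eared[OF n]]
    by (metis (mono_tags, lifting) mem_Collect_eq)
  then have "snake n S' \<in> {act g (snake n S) | g. g \<in> dihedral n}"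
    using eq unfolding symmetry_class_eq[OF snake_two_eared[OF n]] by simp
  then show ?thesis by blast
qed

lemma gap_orbit_if_snake_class_eq:
  assumes n: "4 \<le> n" and S: "S \<subseteq> {1..<n - 3}" and S': "S' \<subseteq> {1..<n - 3}"
    and eq: "symmetry_rel n `` {snake n S} = symmetry_rel n `` {snake n S'}"
  shows "S' \<in> gap_orbit (n - 3) S"
proof -
  have n0: "0 < n" using n by simp
  obtain h where h: "h \<in> dihedral n" "snake n S' = act h (snake n S)"
    using snake_eq_act_if_class_eq[OF n eq] by blast
  let ?w' = "snake_start n S' 1 + 1"
  have "ear_tips n (snake n S') = h ` ear_tips n (snake n S)"
    using h ear_tips_act[OF h(1) n snake_subset_diagonals[OF n]] by simp
  then have "h 0 = 0 \<or> h 0 = ?w'" unfolding ear_tips_snake[OF n] by auto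
  then show ?thesis
  proof
    assume "h 0 = 0"
    then show ?thesis using snake_eq_act_fixing_0[OF n S S' h(1) _ h(2)] unfolding gap_orbit_def
      by auto
  next
    assume h0: "h 0 = ?w'"
    text \<open>Composing with the rotation taking ?w' to 0 reduces to the previous case.\<close>
    let ?r = "rotation n (n - ?w')"
    have "1 \<le> n - 3" using n by simp
    then have w': "?w' < n" using snake_end_bound[of 1 n S'] by simp
    have "?r \<in> dihedral n" using w' by (simp add: rotation_in_dihedral)
    then obtain c where c: "c \<in> dihedral n" "\<forall>i<n. ?r (h i) = c i" using dihedral_comp h(1) n0
      by blast
    have "c 0 = ?r ?w'" using c(2) n0 h0 by metis
    also have "\<dots> = 0" unfolding rotation_def using w' by simp
    finally have "c 0 = 0" .
    have "snake n (gap_mirror (n - 3) (gap_compl (n - 3) S')) = act c (snake n S)"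
      using act_rotation_snake[OF n, of S'] h(2)
        act_comp_cong[of "snake n S" n ?r h c, OF snake_subset_diagonals[OF n] c(2)] by simp
    then show ?thesis
      using snake_eq_act_fixing_0[OF n S gap_mirror_subset[OF gap_compl_subset] c(1) \<open>c 0 = 0\<close>]
        gap_orbit_if_mirror_compl[OF S S'] by blast
  qed
qed

lemma snake_classes_eq_iff:
  assumes "4 \<le> n" "S \<subseteq> {1..<n - 3}" "S' \<subseteq> {1..<n - 3}"
  shows "symmetry_rel n `` {snake n S} = symmetry_rel n `` {snake n S'}
    \<longleftrightarrow> S' \<in> gap_orbit (n - 3) S"
  using snake_class_eq_if_gap_orbit gap_orbit_if_snake_class_eq assms by metis

lemma bij_betw_quotient:
  assumes "h ` B \<subseteq> Q" "Q \<subseteq> h ` B"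
    and "\<And>x y. x \<in> B \<Longrightarrow> y \<in> B \<Longrightarrow> h x = h y \<longleftrightarrow> r `` {x} = r `` {y}"
  shows "\<exists>g. bij_betw g Q (B // r)"
proof -
  define g where "g q = r `` {SOME x. x \<in> B \<and> h x = q}" for q
  have pick: "(SOME x. x \<in> B \<and> h x = q) \<in> B" "h (SOME x. x \<in> B \<and> h x = q) = q" if "q \<in> Q" for q
    using someI_ex[of "\<lambda>x. x \<in> B \<and> h x = q"] assms(2) that by blast+
  have "inj_on g Q"
  proof (rule inj_onI)
    fix q q' assume "q \<in> Q" "q' \<in> Q" "g q = g q'"
    then have "h (SOME x. x \<in> B \<and> h x = q) = h (SOME x. x \<in> B \<and> h x = q')"
      using assms(3) pick unfolding g_def by blast
    then show "q = q'" using pick \<open>q \<in> Q\<close> \<open>q' \<in> Q\<close> by simp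
  qed
  moreover have "g ` Q = B // r"
  proof (intro equalityI subsetI)
    fix c assume "c \<in> g ` Q"
    then show "c \<in> B // r" unfolding g_def using pick by (auto intro: quotientI)
  next
    fix c assume "c \<in> B // r"
    then obtain x where x: "x \<in> B" "c = r `` {x}" by (auto elim: quotientE)
    then have "h x \<in> Q" using assms(1) by blast
    then have "g (h x) = c" unfolding g_def x(2) using assms(3)[OF _ x(1)] pick by blast
    then show "c \<in> g ` Q" using \<open>h x \<in> Q\<close> by blast
  qed
  ultimately show ?thesis unfolding bij_betw_def by blast
qed

lemma symmetry_class_of_snake:
  assumes n: "4 \<le> n" and T: "T \<in> two_eared_triangulations n"
  shows "\<exists>S\<subseteq>{1..<n - 3}. symmetry_rel n `` {T} = symmetry_rel n `` {snake n S}"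
proof -
  have tri: "triangulation n T" and "card {t. is_ear n T t} = 2"
    using T unfolding two_eared_triangulations_def by auto
  then have tips: "card (ear_tips n T) = 2" using card_ears[OF n] by simp
  then obtain u where u: "u \<in> ear_tips n T" by (metis card.empty ex_in_conv zero_neq_numeral)
  then have "u < n" unfolding ear_tips_def by simp
  text \<open>Rotate the ear tip u to 0.\<close>
  define k where "k = (n - u) mod n"
  have k: "k < n" "rotation n k \<in> dihedral n"
    using n rotation_in_dihedral unfolding k_def by simp_all
  have TD: "T \<subseteq> diagonals n" by (rule triangulation_subset[OF tri])
  have tips': "ear_tips n (act (rotation n k) T) = rotation n k ` ear_tips n T"
    by (rule ear_tips_act[OF k(2) n TD])
  moreover have "inj_on (rotation n k) (ear_tips n T)"
    using dihedral_bij(1)[OF k(2)] n by (auto simp: ear_tips_def intro: inj_on_subset)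
  ultimately have "card (ear_tips n (act (rotation n k) T)) = 2" using tips
    by (simp add: card_image)
  moreover have "0 \<in> ear_tips n (act (rotation n k) T)"
    using tips' u rotation_to_0[OF \<open>u < n\<close>] unfolding k_def by force
  ultimately obtain S where S: "S \<subseteq> {1..<n - 3}" "act (rotation n k) T = snake n S"
    using triangulation_with_tip_0_is_snake[OF act_rotation_triangulation[OF k(1) tri] n] by blast
  moreover have "symmetry_rel n `` {act (rotation n k) T} = symmetry_rel n `` {T}"
    using n T k(2) S(2) snake_two_eared[OF n] by (intro symmetry_class_act) simp_all
  ultimately show ?thesis by metis
qed

lemma symmetry_classes_eq:
  assumes n: "4 \<le> n"
  shows "symmetry_classes n
    = (\<lambda>xs. symmetry_rel n `` {snake n (comp_gaps xs)}) ` compositions (n - 3)"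
proof (intro equalityI subsetI)
  fix c assume "c \<in> symmetry_classes n"
  then obtain T where "T \<in> two_eared_triangulations n" "c = symmetry_rel n `` {T}"
    unfolding symmetry_classes_def by (auto elim!: quotientE)
  then obtain S where S: "S \<subseteq> {1..<n - 3}" "c = symmetry_rel n `` {snake n S}"
    using symmetry_class_of_snake[OF n] by metis
  moreover have "1 \<le> n - 3" using n by simp
  then obtain xs where "xs \<in> compositions (n - 3)" "comp_gaps xs = S"
    using comp_gaps_surj S(1) by blast
  ultimately show "c \<in> (\<lambda>xs. symmetry_rel n `` {snake n (comp_gaps xs)}) ` compositions (n - 3)"
    by auto
next
  fix c assume "c \<in> (\<lambda>xs. symmetry_rel n `` {snake n (comp_gaps xs)}) ` compositions (n - 3)"
  then show "c \<in> symmetry_classes n"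
    unfolding symmetry_classes_def using snake_two_eared[OF n] by (auto intro: quotientI)
qed

theorem proposition2p1:
  fixes n :: nat
  assumes "n \<ge> 4"
  shows "\<exists>f. bij_betw f (symmetry_classes n) (comp_classes (n - 3))"
proof -
  let ?class = "\<lambda>xs. symmetry_rel n `` {snake n (comp_gaps xs)}"
  have m: "1 \<le> n - 3" using assms by simp
  have "?class xs = ?class ys \<longleftrightarrow> comp_equiv (n - 3) `` {xs} = comp_equiv (n - 3) `` {ys}"
    if "xs \<in> compositions (n - 3)" "ys \<in> compositions (n - 3)" for xs ys
    unfolding eq_equiv_class_iff[OF equiv_comp_equiv UNIV_I UNIV_I]
    using snake_classes_eq_iff[OF assms comp_gaps_subset comp_gaps_subset] that
      comp_equiv_iff_gap_orbit[OF m that] by blast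
  then have "\<exists>f. bij_betw f (?class ` compositions (n - 3)) (compositions (n - 3) // comp_equiv (n - 3))"
    by (intro bij_betw_quotient) auto
  then show ?thesis unfolding symmetry_classes_eq[OF assms] comp_classes_def .
qed

end
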